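(* Let $\mu_0$ and $\mu_n$ ($n\in\mathbb N$) be discrete ensembles of states in $\mathfrak S(\mathcal H)$, $\mu_n=\{p^n_i,\rho^n_i\}$. The following are equivalent: (a) $D_*(\mu_n,\mu_0)\to0$; (b) $D_K(\mu_n,\mu_0)\to0$; (c) $\lim_{n\to\infty}\sum_ip^n_if(\rho^n_i)=\sum_ip^0_if(\rho^0_i)$ for every bounded continuous function $f$ on $\mathfrak S(\mathcal H)$ (with the trace-norm topology). In other words, both $D_*$ and $D_K$ generate the weak convergence topology on the set of discrete ensembles regarded as probability measures $\sum_ip_i\delta_{\rho_i}$.
   Context: $\mathcal H$ is a separable Hilbert space, $\mathfrak S(\mathcal H)$ the set of density operators, $\|\cdot\|_1$ the trace norm. A discrete ensemble $\{p_i,\rho_i\}$ is a finite or countable family of states $\rho_i$ with a probability distribution $\{p_i\}$; it corresponds to the probability measure $\sum_ip_i\delta_{\rho_i}$ on $\mathfrak S(\mathcal H)$ ($\delta_\rho$ the Dirac measure). $D_0(\{p_i,\rho_i\},\{q_i,\sigma_i\})=\frac12\sum_i\|p_i\rho_i-q_i\sigma_i\|_1$ for ensembles indexed by the same index set (a shorter ensemble is padded with zero-probability entries). For an ensemble $\mu$, $\mathcal E(\mu)$ is the set of all finite or countable ensembles $\{p'_j,\rho'_j\}$ with $\sum_jp'_j\delta_{\rho'_j}=\sum_ip_i\delta_{\rho_i}$, and $D_*(\mu,\nu)=\inf_{\mu'\in\mathcal E(\mu),\nu'\in\mathcal E(\nu)}D_0(\mu',\nu')$. Kantorovich distance: $D_K(\{p_i,\rho_i\},\{q_j,\sigma_j\})=\frac12\inf_{\{P_{ij}\}}\sum_{i,j}P_{ij}\|\rho_i-\sigma_j\|_1$,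 infimum over joint probability distributions with $\sum_jP_{ij}=p_i$, $\sum_iP_{ij}=q_j$. *)

theory Defs
  imports "HOL-Analysis.Analysis"
begin

text \<open>The separable Hilbert space is modelled as l2 over a countable index type 'i
  (finite types give finite dimension, infinite countable types give l2(N)).
  Operators are represented by their matrices w.r.t. the standard basis.\<close>

type_synonym 'i mat = "'i \<Rightarrow> 'i \<Rightarrow> complex"

text \<open>Density operators: positive semidefinite (on all finite sections) matrices with
  trace one. Such a matrix defines a positive trace-class operator of trace 1.\<close>
definition density :: "('i::countable) mat \<Rightarrow> bool" where
  "density \<rho> \<longleftrightarrow>
     (\<forall>F (x::'i \<Rightarrow> complex). finite F \<longrightarrow>
        (\<Sum>i\<in>F. \<Sum>j\<in>F. cnj (x i) * \<rho> i j * x j) \<in> \<real> \<and>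
        Re (\<Sum>i\<in>F. \<Sum>j\<in>F. cnj (x i) * \<rho> i j * x j) \<ge> 0)
     \<and> ((\<lambda>i. \<rho> i i) has_sum 1) UNIV"

definition mat_scale :: "real \<Rightarrow> 'i mat \<Rightarrow> 'i mat" where
  "mat_scale c A = (\<lambda>i j. complex_of_real c * A i j)"

definition mat_diff :: "'i mat \<Rightarrow> 'i mat \<Rightarrow> 'i mat" where
  "mat_diff A B = (\<lambda>i j. A i j - B i j)"

definition contraction_on :: "'i set \<Rightarrow> 'i mat \<Rightarrow> bool" where
  "contraction_on F B \<longleftrightarrow>
     (\<forall>x::'i \<Rightarrow> complex. (\<Sum>i\<in>F. (cmod (\<Sum>j\<in>F. B i j * x j))\<^sup>2) \<le> (\<Sum>j\<in>F. (cmod (x j))\<^sup>2))"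

text \<open>Trace norm of a trace-class operator, via the duality with bounded operators:
  ||T||_1 = sup |Tr(B T)| over finitely supported contractions B.\<close>
definition trace_norm :: "'i mat \<Rightarrow> real" where
  "trace_norm T = Sup {cmod (\<Sum>i\<in>F. \<Sum>j\<in>F. B i j * T j i) | F B. finite F \<and> contraction_on F B}"

text \<open>A discrete (finite or countable) ensemble, indexed by nat; finite ensembles are
  padded with zero-probability entries.\<close>
definition ensemble :: "(nat \<Rightarrow> real) \<Rightarrow> (nat \<Rightarrow> ('i::countable) mat) \<Rightarrow> bool" where
  "ensemble p \<rho> \<longleftrightarrow> (\<forall>i. p i \<ge> 0) \<and> (p has_sum 1) UNIV \<and> (\<forall>i. density (\<rho> i))"

definition same_measure :: "(nat \<Rightarrow> real) \<Rightarrow> (nat \<Rightarrow> 'i mat) \<Rightarrow> (nat \<Rightarrow> real) \<Rightarrow> (nat \<Rightarrow> 'i mat) \<Rightarrow> bool" where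
  "same_measure p \<rho> q \<sigma> \<longleftrightarrow>
     (\<forall>A. infsum p {i. \<rho> i \<in> A} = infsum q {j. \<sigma> j \<in> A})"

definition D0 :: "(nat \<Rightarrow> real) \<Rightarrow> (nat \<Rightarrow> 'i mat) \<Rightarrow> (nat \<Rightarrow> real) \<Rightarrow> (nat \<Rightarrow> 'i mat) \<Rightarrow> real" where
  "D0 p \<rho> q \<sigma> = (1/2) * infsum (\<lambda>i. trace_norm (mat_diff (mat_scale (p i) (\<rho> i)) (mat_scale (q i) (\<sigma> i)))) UNIV"

definition Dstar :: "(nat \<Rightarrow> real) \<Rightarrow> (nat \<Rightarrow> ('i::countable) mat) \<Rightarrow> (nat \<Rightarrow> real) \<Rightarrow> (nat \<Rightarrow> 'i mat) \<Rightarrow> real" where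
  "Dstar p \<rho> q \<sigma> = Inf {D0 p' \<rho>' q' \<sigma>' | p' \<rho>' q' \<sigma>'.
       ensemble p' \<rho>' \<and> same_measure p' \<rho>' p \<rho> \<and> ensemble q' \<sigma>' \<and> same_measure q' \<sigma>' q \<sigma>}"

definition coupling :: "(nat \<Rightarrow> nat \<Rightarrow> real) \<Rightarrow> (nat \<Rightarrow> real) \<Rightarrow> (nat \<Rightarrow> real) \<Rightarrow> bool" where
  "coupling P p q \<longleftrightarrow> (\<forall>i j. P i j \<ge> 0) \<and>
     (\<forall>i. ((\<lambda>j. P i j) has_sum p i) UNIV) \<and> (\<forall>j. ((\<lambda>i. P i j) has_sum q j) UNIV)"

definition DK :: "(nat \<Rightarrow> real) \<Rightarrow> (nat \<Rightarrow> 'i mat) \<Rightarrow> (nat \<Rightarrow> real) \<Rightarrow> (nat \<Rightarrow> 'i mat) \<Rightarrow> real" where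
  "DK p \<rho> q \<sigma> = (1/2) * Inf {infsum (\<lambda>(i,j). P i j * trace_norm (mat_diff (\<rho> i) (\<sigma> j))) UNIV
       | P. coupling P p q}"

definition bounded_cont_states :: "(('i::countable) mat \<Rightarrow> real) \<Rightarrow> bool" where
  "bounded_cont_states f \<longleftrightarrow>
     (\<exists>B. \<forall>\<rho>. density \<rho> \<longrightarrow> \<bar>f \<rho>\<bar> \<le> B) \<and>
     (\<forall>\<rho>. density \<rho> \<longrightarrow> (\<forall>e>0. \<exists>d>0. \<forall>\<sigma>. density \<sigma> \<longrightarrow>
         trace_norm (mat_diff \<sigma> \<rho>) < d \<longrightarrow> \<bar>f \<sigma> - f \<rho>\<bar> < e))"

end

(*
  D_* <= D_K: a coupling P of two ensembles, enumerated along nat x nat, yields representatives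
  {P_ij, rho_i} and {P_ij, sigma_j} of the two measures whose D_0-distance is half the transport
  cost of P.

  D_* -> 0 implies weak convergence: the expectation sum_i p_i f(rho_i) only depends on the
  measure, and for representatives the defect |p f(x) - q f(y)| is controlled by the trace
  distance ||p x - q y||_1, since |p - q| <= ||p x - q y||_1 and q ||x - y||_1 <= 2 ||p x - q y||_1;
  uniform continuity of f at the finitely many states carrying most of the mass of mu_0 does the
  rest.

  Weak convergence implies D_K -> 0: pick finitely many atoms s of mu_0 of total mass > 1 - eps,
  pairwise 2 delta apart. Testing with the bumps max 0 (1 - ||x - s||_1 / delta) shows that
  eventually mu_n puts mass >= (1 - eps) mu_0{s} into the delta-ball around each s. Transporting
  this mass onto the atoms and coupling the remainder arbitrarily costs at most
  delta + 2 (1 - (1 - eps)^2).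
*)

theory Submission
  imports Defs
begin

section \<open>Finite sections of matrices\<close>

definition sesq_form :: "'i mat \<Rightarrow> 'i set \<Rightarrow> ('i \<Rightarrow> complex) \<Rightarrow> ('i \<Rightarrow> complex) \<Rightarrow> complex" where
  "sesq_form \<rho> F x y = (\<Sum>k\<in>F. \<Sum>l\<in>F. cnj (x k) * \<rho> k l * y l)"

lemma sesq_form_add_left: "sesq_form \<rho> F (\<lambda>k. x k + y k) z = sesq_form \<rho> F x z + sesq_form \<rho> F y z"
  by (simp add: sesq_form_def algebra_simps sum.distrib)

lemma sesq_form_add_right: "sesq_form \<rho> F z (\<lambda>k. x k + y k) = sesq_form \<rho> F z x + sesq_form \<rho> F z y"
  by (simp add: sesq_form_def algebra_simps sum.distrib)

lemma sesq_form_scale_left: "sesq_form \<rho> F (\<lambda>k. c * x k) z = cnj c * sesq_form \<rho> F x z"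
  by (simp add: sesq_form_def sum_distrib_left mult_ac)

lemma sesq_form_scale_right: "sesq_form \<rho> F z (\<lambda>k. c * x k) = c * sesq_form \<rho> F z x"
  by (simp add: sesq_form_def sum_distrib_left mult_ac)

lemmas sesq_form_linear =
  sesq_form_add_left sesq_form_add_right sesq_form_scale_left sesq_form_scale_right

lemma density_sesq_form:
  assumes "density \<rho>" "finite F"
  shows "sesq_form \<rho> F x x \<in> \<real>" "0 \<le> Re (sesq_form \<rho> F x x)"
  using assms unfolding density_def sesq_form_def by auto

lemma density_sesq_form_of_real:
  assumes "density \<rho>" "finite F"
  shows "sesq_form \<rho> F x x = of_real (Re (sesq_form \<rho> F x x))"
  using density_sesq_form(1)[OF assms] by (simp add: complex_eq_iff complex_is_Real_iff)

lemma density_sesq_form_commute: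
  assumes "density \<rho>" "finite F"
  shows "sesq_form \<rho> F y x = cnj (sesq_form \<rho> F x y)"
proof -
  define a b where "a = sesq_form \<rho> F x y" and "b = sesq_form \<rho> F y x"
  have "Im (sesq_form \<rho> F z z) = 0" for z
    using density_sesq_form(1)[OF assms] by (simp add: complex_is_Real_iff)
  from this[of "\<lambda>k. x k + y k"] this[of "\<lambda>k. x k + \<i> * y k"] this[of x] this[of y]
  have "Im a + Im b = 0" "Re a - Re b = 0"
    by (simp_all add: sesq_form_linear a_def b_def algebra_simps)
  then show ?thesis by (simp add: complex_eq_iff a_def b_def)
qed

lemma quadratic_nonneg_imp_le:
  fixes X A D :: real
  assumes nonneg: "\<And>t. 0 \<le> X - 2 * t * A + t\<^sup>2 * A * D" and "0 < A"
  shows "A \<le> X * D"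
proof (cases "D > 0")
  case True
  have "0 \<le> X - 2 * (1 / D) * A + (1 / D)\<^sup>2 * A * D" by (rule nonneg)
  with True show ?thesis by (simp add: field_simps power2_eq_square)
next
  case False
  define t where "t = (X + 1) / (2 * A)"
  have "t\<^sup>2 * A * D \<le> 0"
    using False \<open>0 < A\<close> by (simp add: mult_nonneg_nonpos)
  moreover have "2 * t * A = X + 1" using \<open>0 < A\<close> by (simp add: t_def)
  ultimately show ?thesis using nonneg[of t] by linarith
qed

lemma density_sesq_form_Cauchy_Schwarz:
  assumes "density \<rho>" "finite F"
  shows "cmod (sesq_form \<rho> F x y) \<le> sqrt (Re (sesq_form \<rho> F x x)) * sqrt (Re (sesq_form \<rho> F y y))"
proof (cases "sesq_form \<rho> F x y = 0")
  case False
  define a X D where "a = sesq_form \<rho> F x y" and "X = Re (sesq_form \<rho> F x x)"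
    and "D = Re (sesq_form \<rho> F y y)"
  have "0 \<le> X - 2 * t * (cmod a)\<^sup>2 + t\<^sup>2 * (cmod a)\<^sup>2 * D" for t
  proof -
    \<comment> \<open>expand the form at \<open>x - t a\<^sup>* y\<close>\<close>
    define c where "c = - of_real t * cnj a"
    have "sesq_form \<rho> F (\<lambda>k. x k + c * y k) (\<lambda>k. x k + c * y k)
        = of_real X + c * a + cnj c * cnj a + cnj c * c * of_real D"
      using density_sesq_form_commute[OF assms, of y x] density_sesq_form_of_real[OF assms]
      by (simp add: sesq_form_linear a_def X_def D_def algebra_simps)
    also have "\<dots> = of_real X - 2 * of_real t * (a * cnj a) + (of_real t)\<^sup>2 * (a * cnj a) * of_real D"
      by (simp add: c_def algebra_simps power2_eq_square)
    also have "\<dots> = of_real (X - 2 * t * (cmod a)\<^sup>2 + t\<^sup>2 * (cmod a)\<^sup>2 * D)"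
      by (simp flip: complex_norm_square)
    finally show ?thesis using density_sesq_form(2)[OF assms, of "\<lambda>k. x k + c * y k"] by simp
  qed
  then have "(cmod a)\<^sup>2 \<le> X * D" using False by (intro quadratic_nonneg_imp_le) (auto simp: a_def)
  then have "cmod a \<le> sqrt (X * D)" by (simp add: real_le_rsqrt)
  then show ?thesis by (simp add: a_def X_def D_def real_sqrt_mult)
qed (simp add: density_sesq_form(2)[OF assms])

definition sq_norm_on :: "'i set \<Rightarrow> ('i \<Rightarrow> complex) \<Rightarrow> real" where
  "sq_norm_on F x = (\<Sum>k\<in>F. (cmod (x k))\<^sup>2)"

definition id_mat :: "'i mat" where
  "id_mat i j = (if j = i then 1 else 0)"

definition mat_adj :: "'i mat \<Rightarrow> 'i mat" where
  "mat_adj A i j = cnj (A j i)"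

definition mat_mult_on :: "'i set \<Rightarrow> 'i mat \<Rightarrow> 'i mat \<Rightarrow> 'i mat" where
  "mat_mult_on F A B i j = (\<Sum>k\<in>F. A i k * B k j)"

definition trace_prod :: "'i set \<Rightarrow> 'i mat \<Rightarrow> 'i mat \<Rightarrow> complex" where
  "trace_prod F B T = (\<Sum>i\<in>F. \<Sum>j\<in>F. B i j * T j i)"

lemma cnj_id_mat [simp]: "cnj (id_mat i j) = id_mat i j"
  by (simp add: id_mat_def)

lemma sq_norm_on_nonneg: "0 \<le> sq_norm_on F x"
  by (simp add: sq_norm_on_def sum_nonneg)

lemma sum_id_mat_right: "finite F \<Longrightarrow> i \<in> F \<Longrightarrow> (\<Sum>l\<in>F. f l * id_mat i l) = f i"
  by (simp add: id_mat_def if_distrib[of "\<lambda>z. f _ * z"] cong: if_cong)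

lemma sum_id_mat_left: "finite F \<Longrightarrow> i \<in> F \<Longrightarrow> (\<Sum>l\<in>F. id_mat i l * f l) = f i"
  using sum_id_mat_right[of F i f] by (simp add: mult.commute)

lemma contraction_on_iff: "contraction_on F B \<longleftrightarrow> (\<forall>x. sq_norm_on F (\<lambda>i. \<Sum>j\<in>F. B i j * x j) \<le> sq_norm_on F x)"
  by (simp add: contraction_on_def sq_norm_on_def)

lemma contraction_on_zero: "contraction_on F (\<lambda>_ _. 0)"
  by (simp add: contraction_on_def sum_nonneg)

lemma contraction_on_id_mat: "contraction_on F id_mat"
  by (cases "finite F") (simp_all add: contraction_on_def sum_id_mat_left)

lemma contraction_on_mult:
  assumes "contraction_on F A" "contraction_on F B"
  shows "contraction_on F (mat_mult_on F A B)"
  unfolding contraction_on_iff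
proof
  fix x
  have "(\<Sum>j\<in>F. mat_mult_on F A B i j * x j) = (\<Sum>k\<in>F. A i k * (\<Sum>j\<in>F. B k j * x j))" for i
    unfolding mat_mult_on_def sum_distrib_left sum_distrib_right
    by (subst sum.swap) (simp add: mult_ac)
  then have "sq_norm_on F (\<lambda>i. \<Sum>j\<in>F. mat_mult_on F A B i j * x j)
      \<le> sq_norm_on F (\<lambda>k. \<Sum>j\<in>F. B k j * x j)"
    using assms(1) by (simp add: contraction_on_iff)
  also have "\<dots> \<le> sq_norm_on F x"
    using assms(2) by (simp add: contraction_on_iff)
  finally show "sq_norm_on F (\<lambda>i. \<Sum>j\<in>F. mat_mult_on F A B i j * x j) \<le> sq_norm_on F x" .
qed

lemma cmod_sum_mult_le:
  fixes x y :: "'a \<Rightarrow> complex"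
  shows "cmod (\<Sum>i\<in>A. x i * y i) \<le> sqrt (\<Sum>i\<in>A. (cmod (x i))\<^sup>2) * sqrt (\<Sum>i\<in>A. (cmod (y i))\<^sup>2)"
proof -
  have "cmod (\<Sum>i\<in>A. x i * y i) \<le> (\<Sum>i\<in>A. cmod (x i) * cmod (y i))"
    using norm_sum[of "\<lambda>i. x i * y i" A] by (simp add: norm_mult)
  also have "\<dots> \<le> L2_set (\<lambda>i. cmod (x i)) A * L2_set (\<lambda>i. cmod (y i)) A"
    using L2_set_mult_ineq[of "\<lambda>i. cmod (x i)" "\<lambda>i. cmod (y i)" A] by simp
  finally show ?thesis by (simp add: L2_set_def)
qed

lemma contraction_on_adj:
  assumes "contraction_on F B"
  shows "contraction_on F (mat_adj B)"
  unfolding contraction_on_iff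
proof
  fix y
  define z where "z = (\<lambda>l. \<Sum>i\<in>F. mat_adj B l i * y i)"
  define w where "w = (\<lambda>i. \<Sum>l\<in>F. B i l * z l)"
  \<comment> \<open>\<open>\<parallel>B\<^sup>* y\<parallel>\<^sup>2 = \<langle>y, B B\<^sup>* y\<rangle> \<le> \<parallel>y\<parallel> \<parallel>B\<^sup>* y\<parallel>\<close>\<close>
  have "complex_of_real (sq_norm_on F z) = (\<Sum>l\<in>F. z l * cnj (z l))"
    unfolding sq_norm_on_def of_real_sum complex_norm_square ..
  also have "\<dots> = (\<Sum>l\<in>F. \<Sum>i\<in>F. cnj (B i l) * y i * cnj (z l))"
    by (simp add: z_def mat_adj_def sum_distrib_right)
  also have "\<dots> = (\<Sum>i\<in>F. y i * cnj (w i))"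
    unfolding w_def by (subst sum.swap) (simp add: sum_distrib_left mult_ac)
  finally have "sq_norm_on F z = cmod (\<Sum>i\<in>F. y i * cnj (w i))"
    by (metis norm_of_real abs_of_nonneg sq_norm_on_nonneg)
  also have "\<dots> \<le> sqrt (sq_norm_on F y) * sqrt (sq_norm_on F w)"
    using cmod_sum_mult_le[of y "\<lambda>i. cnj (w i)" F] by (simp add: sq_norm_on_def)
  also have "\<dots> \<le> sqrt (sq_norm_on F y) * sqrt (sq_norm_on F z)"
    using assms unfolding contraction_on_iff w_def
    by (intro mult_left_mono real_sqrt_le_mono) (auto simp: sq_norm_on_nonneg)
  finally have le: "sq_norm_on F z \<le> sqrt (sq_norm_on F y) * sqrt (sq_norm_on F z)" .
  have "(sq_norm_on F z)\<^sup>2 \<le> (sqrt (sq_norm_on F y) * sqrt (sq_norm_on F z))\<^sup>2"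
    using le sq_norm_on_nonneg[of F z] by (intro power_mono) auto
  then have "sq_norm_on F z * sq_norm_on F z \<le> sq_norm_on F y * sq_norm_on F z"
    by (simp add: power_mult_distrib sq_norm_on_nonneg flip: power2_eq_square)
  then show "sq_norm_on F z \<le> sq_norm_on F y"
    using sq_norm_on_nonneg[of F z] by (cases "sq_norm_on F z = 0") (auto simp: sq_norm_on_nonneg)
qed

lemma contraction_on_entry:
  assumes "contraction_on F B" "finite F" "i \<in> F" "j \<in> F"
  shows "cmod (B i j) \<le> 1"
proof -
  have "sq_norm_on F (\<lambda>i. \<Sum>l\<in>F. B i l * id_mat j l) \<le> sq_norm_on F (id_mat j)"
    using assms(1) by (simp add: contraction_on_iff)
  moreover have "sq_norm_on F (id_mat j) = 1"
    using assms(2,4) by (simp add: sq_norm_on_def id_mat_def if_distrib[of "\<lambda>z. (cmod z)\<^sup>2"] cong: if_cong)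
  ultimately have "(\<Sum>i\<in>F. (cmod (B i j))\<^sup>2) \<le> 1"
    using assms by (simp add: sq_norm_on_def sum_id_mat_right)
  moreover have "(cmod (B i j))\<^sup>2 \<le> (\<Sum>i\<in>F. (cmod (B i j))\<^sup>2)"
    using assms by (intro member_le_sum) auto
  ultimately have "(cmod (B i j))\<^sup>2 \<le> 1" by linarith
  then show ?thesis by (metis abs_norm_cancel abs_square_le_1)
qed

lemma trace_prod_le_sum_entries:
  assumes "contraction_on F B" "finite F"
  shows "cmod (trace_prod F B T) \<le> (\<Sum>i\<in>F. \<Sum>j\<in>F. cmod (T j i))"
proof -
  have "cmod (trace_prod F B T) \<le> (\<Sum>i\<in>F. \<Sum>j\<in>F. cmod (B i j * T j i))"
    unfolding trace_prod_def by (intro order_trans[OF norm_sum] sum_mono norm_sum)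
  also have "\<dots> \<le> (\<Sum>i\<in>F. \<Sum>j\<in>F. cmod (T j i))"
    using contraction_on_entry[OF assms]
    by (intro sum_mono) (auto simp: norm_mult intro: mult_left_le_one_le)
  finally show ?thesis .
qed

lemma density_diag:
  assumes "density \<rho>"
  shows "\<rho> i i \<in> \<real>" "0 \<le> Re (\<rho> i i)"
proof -
  have "sesq_form \<rho> {i} (id_mat i) (id_mat i) = \<rho> i i" by (simp add: sesq_form_def id_mat_def)
  then show "\<rho> i i \<in> \<real>" "0 \<le> Re (\<rho> i i)" using density_sesq_form[OF assms, of "{i}" "id_mat i"] by auto
qed

lemma density_diag_sum_le_1:
  assumes "density \<rho>" "finite F"
  shows "(\<Sum>i\<in>F. Re (\<rho> i i)) \<le> 1"
proof -
  have "((\<lambda>i. Re (\<rho> i i)) has_sum 1) UNIV"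
    using assms(1) has_sum_Re unfolding density_def by fastforce
  then show ?thesis using assms density_diag[OF assms(1)] by (intro finite_sum_le_has_sum) auto
qed

lemma trace_prod_eq_sum_sesq_form:
  assumes "finite F"
  shows "trace_prod F B \<rho> = (\<Sum>i\<in>F. sesq_form \<rho> F (\<lambda>k. cnj (B i k)) (id_mat i))"
  unfolding trace_prod_def sesq_form_def using assms
  by (intro sum.cong refl) (simp add: sum_id_mat_right)

lemma trace_prod_adj_mult_eq_sum_sesq_form:
  "trace_prod F (mat_mult_on F (mat_adj B) B) \<rho> = (\<Sum>i\<in>F. sesq_form \<rho> F (\<lambda>k. cnj (B i k)) (\<lambda>k. cnj (B i k)))"
proof -
  have "(\<Sum>i\<in>F. sesq_form \<rho> F (\<lambda>k. cnj (B i k)) (\<lambda>k. cnj (B i k)))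
      = (\<Sum>i\<in>F. \<Sum>k\<in>F. \<Sum>l\<in>F. B i k * \<rho> k l * cnj (B i l))"
    by (simp add: sesq_form_def)
  also have "\<dots> = (\<Sum>i\<in>F. \<Sum>l\<in>F. \<Sum>k\<in>F. B i k * \<rho> k l * cnj (B i l))"
    by (rule sum.cong[OF refl], rule sum.swap)
  also have "\<dots> = (\<Sum>l\<in>F. \<Sum>i\<in>F. \<Sum>k\<in>F. B i k * \<rho> k l * cnj (B i l))"
    by (rule sum.swap)
  also have "\<dots> = (\<Sum>l\<in>F. \<Sum>k\<in>F. \<Sum>i\<in>F. B i k * \<rho> k l * cnj (B i l))"
    by (rule sum.cong[OF refl], rule sum.swap)
  also have "\<dots> = trace_prod F (mat_mult_on F (mat_adj B) B) \<rho>"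
    unfolding trace_prod_def mat_mult_on_def mat_adj_def
    by (simp add: sum_distrib_left sum_distrib_right mult_ac)
  finally show ?thesis ..
qed

lemma density_trace_prod_sq_le:
  assumes "density \<rho>" "finite F" "contraction_on F B"
  shows "(cmod (trace_prod F B \<rho>))\<^sup>2 \<le> cmod (trace_prod F (mat_mult_on F (mat_adj B) B) \<rho>)"
proof -
  \<comment> \<open>\<open>tr (B \<rho>) = \<Sum>\<^sub>i \<langle>u\<^sub>i, \<rho> e\<^sub>i\<rangle>\<close> with \<open>u\<^sub>i\<close> the conjugated \<open>i\<close>-th row of \<open>B\<close>; apply Cauchy-Schwarz twice\<close>
  define u where "u = (\<lambda>i k. cnj (B i k))"
  define A where "A = (\<lambda>i. Re (sesq_form \<rho> F (u i) (u i)))"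
  define b where "b = (\<lambda>i. Re (\<rho> i i))"
  have A0: "0 \<le> A i" for i using density_sesq_form[OF assms(1,2)] by (simp add: A_def)
  have b0: "0 \<le> b i" for i using density_diag[OF assms(1)] by (simp add: b_def)
  have "Re (sesq_form \<rho> F (id_mat i) (id_mat i)) = b i" if "i \<in> F" for i
    using that assms(2) unfolding sesq_form_def by (simp add: b_def sum_id_mat_right sum_id_mat_left)
  then have CS: "cmod (sesq_form \<rho> F (u i) (id_mat i)) \<le> sqrt (A i) * sqrt (b i)" if "i \<in> F" for i
    using density_sesq_form_Cauchy_Schwarz[OF assms(1,2), of "u i" "id_mat i"] that by (simp add: A_def)
  have "cmod (trace_prod F B \<rho>) \<le> (\<Sum>i\<in>F. cmod (sesq_form \<rho> F (u i) (id_mat i)))"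
    unfolding trace_prod_eq_sum_sesq_form[OF assms(2)] u_def by (rule norm_sum)
  also have "\<dots> \<le> (\<Sum>i\<in>F. sqrt (A i) * sqrt (b i))"
    using CS by (rule sum_mono)
  also have "\<dots> \<le> sqrt (\<Sum>i\<in>F. A i) * sqrt (\<Sum>i\<in>F. b i)"
    using L2_set_mult_ineq[of "\<lambda>i. sqrt (A i)" "\<lambda>i. sqrt (b i)" F] A0 b0
    by (simp add: L2_set_def real_sqrt_mult)
  also have "\<dots> \<le> sqrt (\<Sum>i\<in>F. A i)"
    using density_diag_sum_le_1[OF assms(1,2)] b0 A0
    by (intro mult_left_le) (auto simp: b_def sum_nonneg)
  finally have "(cmod (trace_prod F B \<rho>))\<^sup>2 \<le> (sqrt (\<Sum>i\<in>F. A i))\<^sup>2"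
    by (intro power_mono) auto
  also have "\<dots> = Re (trace_prod F (mat_mult_on F (mat_adj B) B) \<rho>)"
    using A0 by (simp add: sum_nonneg trace_prod_adj_mult_eq_sum_sesq_form A_def u_def Re_sum)
  also have "\<dots> \<le> cmod (trace_prod F (mat_mult_on F (mat_adj B) B) \<rho>)"
    by (rule complex_Re_le_cmod)
  finally show ?thesis .
qed

lemma density_trace_prod_le_1:
  assumes "density \<rho>" "finite F" "contraction_on F B"
  shows "cmod (trace_prod F B \<rho>) \<le> 1"
proof -
  \<comment> \<open>the supremum \<open>s\<close> of \<open>|tr (B \<rho>)|\<close> over all contractions satisfies \<open>s \<le> \<surd>s\<close>, since \<open>B\<^sup>* B\<close> is a contraction\<close>
  define S where "S = {cmod (trace_prod F B' \<rho>) | B'. contraction_on F B'}"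
  have bdd: "bdd_above S"
    unfolding S_def bdd_above_def using trace_prod_le_sum_entries[OF _ assms(2)] by blast
  have mem: "cmod (trace_prod F B' \<rho>) \<in> S" if "contraction_on F B'" for B'
    using that S_def by blast
  have "0 \<in> S"
    using mem[OF contraction_on_zero] by (simp add: trace_prod_def)
  have "x \<le> sqrt (Sup S)" if "x \<in> S" for x
  proof -
    obtain B' where B': "contraction_on F B'" "x = cmod (trace_prod F B' \<rho>)"
      using \<open>x \<in> S\<close> S_def by blast
    have "x\<^sup>2 \<le> cmod (trace_prod F (mat_mult_on F (mat_adj B') B') \<rho>)"
      unfolding B'(2) by (rule density_trace_prod_sq_le[OF assms(1,2) B'(1)])
    also have "\<dots> \<le> Sup S"
      by (rule cSup_upper[OF mem[OF contraction_on_mult[OF contraction_on_adj[OF B'(1)] B'(1)]] bdd])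
    finally show ?thesis by (rule real_le_rsqrt)
  qed
  then have le_sqrt: "Sup S \<le> sqrt (Sup S)"
    using \<open>0 \<in> S\<close> by (intro cSup_least) auto
  have "0 \<le> Sup S" by (rule cSup_upper[OF \<open>0 \<in> S\<close> bdd])
  have "Sup S \<le> 1"
  proof (rule ccontr)
    assume "\<not> Sup S \<le> 1"
    then have "sqrt (Sup S) * 1 < sqrt (Sup S) * sqrt (Sup S)"
      by (intro mult_strict_left_mono) auto
    with le_sqrt \<open>0 \<le> Sup S\<close> show False by simp
  qed
  then show ?thesis using cSup_upper[OF mem[OF assms(3)] bdd] by linarith
qed

section \<open>The trace norm\<close>

definition trace_pairings :: "'i mat \<Rightarrow> real set" where
  "trace_pairings T = {cmod (trace_prod F B T) | F B. finite F \<and> contraction_on F B}"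

definition trace_class :: "'i mat \<Rightarrow> bool" where
  "trace_class T \<longleftrightarrow> bdd_above (trace_pairings T)"

abbreviation scaled_diff :: "real \<Rightarrow> 'i mat \<Rightarrow> real \<Rightarrow> 'i mat \<Rightarrow> 'i mat" where
  "scaled_diff a \<rho> b \<sigma> \<equiv> mat_diff (mat_scale a \<rho>) (mat_scale b \<sigma>)"

lemma trace_norm_eq_Sup: "trace_norm T = Sup (trace_pairings T)"
  by (simp add: trace_norm_def trace_pairings_def trace_prod_def)

lemma zero_in_trace_pairings: "0 \<in> trace_pairings T"
  unfolding trace_pairings_def
  by (rule CollectI, rule exI[of _ "{}"], rule exI[of _ "\<lambda>_ _. 0"]) (simp add: trace_prod_def contraction_on_zero)

lemma trace_norm_ge:
  "trace_class T \<Longrightarrow> finite F \<Longrightarrow> contraction_on F B \<Longrightarrow> cmod (trace_prod F B T) \<le> trace_norm T"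
  unfolding trace_norm_eq_Sup trace_class_def by (rule cSup_upper) (auto simp: trace_pairings_def)

lemma trace_norm_le:
  "(\<And>F B. finite F \<Longrightarrow> contraction_on F B \<Longrightarrow> cmod (trace_prod F B T) \<le> c) \<Longrightarrow> trace_norm T \<le> c"
  unfolding trace_norm_eq_Sup using zero_in_trace_pairings[of T]
  by (intro cSup_least) (auto simp: trace_pairings_def)

lemma trace_norm_nonneg: "trace_class T \<Longrightarrow> 0 \<le> trace_norm T"
  unfolding trace_norm_eq_Sup trace_class_def using zero_in_trace_pairings by (rule cSup_upper)

lemma trace_prod_mat_diff: "trace_prod F B (mat_diff A C) = trace_prod F B A - trace_prod F B C"
  by (simp add: trace_prod_def mat_diff_def algebra_simps sum_subtractf)

lemma trace_prod_mat_scale: "trace_prod F B (mat_scale a A) = of_real a * trace_prod F B A"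
  by (simp add: trace_prod_def mat_scale_def sum_distrib_left mult_ac)

lemma mat_scale_1 [simp]: "mat_scale 1 A = A"
  by (simp add: mat_scale_def)

lemma trace_norm_triangle:
  assumes "trace_class (mat_diff x y)" "trace_class (mat_diff y z)"
  shows "trace_norm (mat_diff x z) \<le> trace_norm (mat_diff x y) + trace_norm (mat_diff y z)"
proof (rule trace_norm_le)
  fix F :: "'a set" and B assume FB: "finite F" "contraction_on F B"
  have "cmod (trace_prod F B (mat_diff x z))
      \<le> cmod (trace_prod F B (mat_diff x y)) + cmod (trace_prod F B (mat_diff y z))"
    using norm_triangle_ineq[of "trace_prod F B (mat_diff x y)" "trace_prod F B (mat_diff y z)"]
    by (simp add: trace_prod_mat_diff)
  also have "\<dots> \<le> trace_norm (mat_diff x y) + trace_norm (mat_diff y z)"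
    using trace_norm_ge[OF assms(1) FB] trace_norm_ge[OF assms(2) FB] by simp
  finally show "cmod (trace_prod F B (mat_diff x z)) \<le> trace_norm (mat_diff x y) + trace_norm (mat_diff y z)" .
qed

lemma trace_norm_diff_commute: "trace_norm (mat_diff x y) = trace_norm (mat_diff y x)"
proof -
  have "trace_prod F B (mat_diff x y) = - trace_prod F B (mat_diff y x)" for F B
    by (simp add: trace_prod_mat_diff)
  then have "trace_pairings (mat_diff x y) = trace_pairings (mat_diff y x)"
    unfolding trace_pairings_def by (metis norm_minus_cancel)
  then show ?thesis by (simp add: trace_norm_eq_Sup)
qed

lemma trace_norm_diff_self: "trace_norm (mat_diff x x) = 0"
proof -
  have "trace_pairings (mat_diff x x) = {0}"
    unfolding trace_pairings_def
    by (auto simp: trace_prod_mat_diff intro!: exI[of _ "{}"] exI[of _ "\<lambda>_ _. 0"] contraction_on_zero)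
  then show ?thesis by (simp add: trace_norm_eq_Sup)
qed

lemma trace_norm_diff_pos:
  assumes "trace_class (mat_diff x y)" "x \<noteq> y"
  shows "0 < trace_norm (mat_diff x y)"
proof -
  obtain j i where ji: "x j i \<noteq> y j i" using assms(2) by (meson ext)
  define B where "B = (\<lambda>k l. if k = i \<and> l = j then (1::complex) else 0)"
  have "contraction_on {i, j} B"
    unfolding contraction_on_def B_def by (cases "i = j") auto
  moreover have "trace_prod {i, j} B (mat_diff x y) = x j i - y j i"
    by (cases "i = j") (auto simp: trace_prod_def B_def mat_diff_def)
  ultimately have "cmod (x j i - y j i) \<le> trace_norm (mat_diff x y)"
    using trace_norm_ge[OF assms(1), of "{i, j}" B] by simp
  moreover have "0 < cmod (x j i - y j i)" using ji by simp
  ultimately show ?thesis by linarith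
qed

lemma density_trace_prod_scaled_diff_le:
  assumes "density \<rho>" "density \<sigma>" "finite F" "contraction_on F B"
  shows "cmod (trace_prod F B (scaled_diff a \<rho> b \<sigma>)) \<le> \<bar>a\<bar> + \<bar>b\<bar>"
proof -
  have "cmod (trace_prod F B (scaled_diff a \<rho> b \<sigma>))
      \<le> \<bar>a\<bar> * cmod (trace_prod F B \<rho>) + \<bar>b\<bar> * cmod (trace_prod F B \<sigma>)"
    using norm_triangle_ineq4[of "of_real a * trace_prod F B \<rho>" "of_real b * trace_prod F B \<sigma>"]
    by (simp add: trace_prod_mat_diff trace_prod_mat_scale norm_mult)
  also have "\<dots> \<le> \<bar>a\<bar> + \<bar>b\<bar>"
    using density_trace_prod_le_1[OF assms(1,3,4)] density_trace_prod_le_1[OF assms(2,3,4)]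
    by (intro add_mono mult_left_le) auto
  finally show ?thesis .
qed

lemma density_trace_class:
  "density \<rho> \<Longrightarrow> density \<sigma> \<Longrightarrow> trace_class (scaled_diff a \<rho> b \<sigma>)"
  unfolding trace_class_def bdd_above_def trace_pairings_def
  using density_trace_prod_scaled_diff_le by blast

lemma density_diff_trace_class: "density \<rho> \<Longrightarrow> density \<sigma> \<Longrightarrow> trace_class (mat_diff \<rho> \<sigma>)"
  using density_trace_class[of \<rho> \<sigma> 1 1] by simp

lemma trace_norm_scaled_diff_le:
  "density \<rho> \<Longrightarrow> density \<sigma> \<Longrightarrow> trace_norm (scaled_diff a \<rho> b \<sigma>) \<le> \<bar>a\<bar> + \<bar>b\<bar>"
  by (intro trace_norm_le density_trace_prod_scaled_diff_le)

lemma trace_norm_diff_le_2: "density \<rho> \<Longrightarrow> density \<sigma> \<Longrightarrow> trace_norm (mat_diff \<rho> \<sigma>) \<le> 2"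
  using trace_norm_scaled_diff_le[of \<rho> \<sigma> 1 1] by simp

lemma trace_norm_scaled_diff_nonneg:
  "density \<rho> \<Longrightarrow> density \<sigma> \<Longrightarrow> 0 \<le> trace_norm (scaled_diff a \<rho> b \<sigma>)"
  by (intro trace_norm_nonneg density_trace_class)

lemma trace_norm_diff_nonneg: "density \<rho> \<Longrightarrow> density \<sigma> \<Longrightarrow> 0 \<le> trace_norm (mat_diff \<rho> \<sigma>)"
  by (intro trace_norm_nonneg density_diff_trace_class)

lemma trace_norm_scaled_diff_same:
  assumes "density \<rho>" "density \<sigma>" "0 \<le> c"
  shows "trace_norm (scaled_diff c \<rho> c \<sigma>) = c * trace_norm (mat_diff \<rho> \<sigma>)"
proof -
  have tr: "cmod (trace_prod F B (scaled_diff c \<rho> c \<sigma>)) = c * cmod (trace_prod F B (mat_diff \<rho> \<sigma>))" for F B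
    using assms(3) by (simp add: trace_prod_mat_diff trace_prod_mat_scale norm_mult
        flip: right_diff_distrib)
  show ?thesis
  proof (rule antisym)
    show "trace_norm (scaled_diff c \<rho> c \<sigma>) \<le> c * trace_norm (mat_diff \<rho> \<sigma>)"
      using trace_norm_ge[OF density_diff_trace_class[OF assms(1,2)]] assms(3)
      by (intro trace_norm_le) (simp add: tr mult_left_mono)
  next
    show "c * trace_norm (mat_diff \<rho> \<sigma>) \<le> trace_norm (scaled_diff c \<rho> c \<sigma>)"
    proof (cases "c = 0")
      case True then show ?thesis using trace_norm_scaled_diff_nonneg[OF assms(1,2)] by simp
    next
      case False
      then have "trace_norm (mat_diff \<rho> \<sigma>) \<le> trace_norm (scaled_diff c \<rho> c \<sigma>) / c"
        using trace_norm_ge[OF density_trace_class[OF assms(1,2)], of _ _ c c] assms(3)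
        by (intro trace_norm_le) (simp add: tr field_simps)
      then show ?thesis using False assms(3) by (simp add: field_simps)
    qed
  qed
qed

lemma trace_norm_scaled_diff_ge:
  assumes "density \<rho>" "density \<sigma>"
  shows "\<bar>a - b\<bar> \<le> trace_norm (scaled_diff a \<rho> b \<sigma>)"
proof -
  \<comment> \<open>pair with the identity on ever larger finite sections: the traces tend to \<open>a - b\<close>\<close>
  have "((\<lambda>F. sum (\<lambda>i. \<rho> i i) F) \<longlongrightarrow> 1) (finite_subsets_at_top UNIV)"
       "((\<lambda>F. sum (\<lambda>i. \<sigma> i i) F) \<longlongrightarrow> 1) (finite_subsets_at_top UNIV)"
    using assms unfolding density_def has_sum_def by simp_all
  then have "((\<lambda>F. cmod (of_real a * sum (\<lambda>i. \<rho> i i) F - of_real b * sum (\<lambda>i. \<sigma> i i) F))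
      \<longlongrightarrow> cmod (of_real a * 1 - of_real b * 1)) (finite_subsets_at_top UNIV)"
    by (intro tendsto_intros)
  moreover have "\<forall>\<^sub>F F in finite_subsets_at_top UNIV.
      cmod (of_real a * sum (\<lambda>i. \<rho> i i) F - of_real b * sum (\<lambda>i. \<sigma> i i) F) \<le> trace_norm (scaled_diff a \<rho> b \<sigma>)"
  proof (rule eventually_finite_subsets_at_top_weakI)
    fix F :: "'a set" assume "finite F"
    then have "trace_prod F id_mat (scaled_diff a \<rho> b \<sigma>)
        = of_real a * sum (\<lambda>i. \<rho> i i) F - of_real b * sum (\<lambda>i. \<sigma> i i) F"
      by (simp add: trace_prod_def sum_id_mat_left mat_diff_def mat_scale_def sum_subtractf
          sum_distrib_left)
    then show "cmod (of_real a * sum (\<lambda>i. \<rho> i i) F - of_real b * sum (\<lambda>i. \<sigma> i i) F)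
        \<le> trace_norm (scaled_diff a \<rho> b \<sigma>)"
      using trace_norm_ge[OF density_trace_class[OF assms, of a b] \<open>finite F\<close> contraction_on_id_mat] by simp
  qed
  ultimately have "cmod (of_real a * 1 - of_real b * 1) \<le> trace_norm (scaled_diff a \<rho> b \<sigma>)"
    by (rule tendsto_upperbound) simp
  then show ?thesis by (simp flip: of_real_diff)
qed

lemma trace_norm_diff_le_scaled_diff:
  assumes "density \<rho>" "density \<sigma>" "0 \<le> q"
  shows "q * trace_norm (mat_diff \<rho> \<sigma>) \<le> 2 * trace_norm (scaled_diff p \<rho> q \<sigma>)"
proof -
  \<comment> \<open>\<open>q (\<rho> - \<sigma>) = (q - p) \<rho> + (p \<rho> - q \<sigma>)\<close>\<close>
  have "trace_norm (scaled_diff q \<rho> q \<sigma>) \<le> \<bar>q - p\<bar> + trace_norm (scaled_diff p \<rho> q \<sigma>)"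
  proof (rule trace_norm_le)
    fix F :: "'a set" and B assume FB: "finite F" "contraction_on F B"
    have "trace_prod F B (scaled_diff q \<rho> q \<sigma>)
        = of_real (q - p) * trace_prod F B \<rho> + trace_prod F B (scaled_diff p \<rho> q \<sigma>)"
      by (simp add: trace_prod_mat_diff trace_prod_mat_scale algebra_simps)
    then have "cmod (trace_prod F B (scaled_diff q \<rho> q \<sigma>))
        \<le> \<bar>q - p\<bar> * cmod (trace_prod F B \<rho>) + cmod (trace_prod F B (scaled_diff p \<rho> q \<sigma>))"
      by (metis norm_mult norm_of_real norm_triangle_ineq)
    also have "\<dots> \<le> \<bar>q - p\<bar> * 1 + trace_norm (scaled_diff p \<rho> q \<sigma>)"
      using density_trace_prod_le_1[OF assms(1) FB] trace_norm_ge[OF density_trace_class[OF assms(1,2)] FB]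
      by (intro add_mono mult_left_mono) auto
    finally show "cmod (trace_prod F B (scaled_diff q \<rho> q \<sigma>)) \<le> \<bar>q - p\<bar> + trace_norm (scaled_diff p \<rho> q \<sigma>)"
      by simp
  qed
  moreover have "\<bar>q - p\<bar> \<le> trace_norm (scaled_diff p \<rho> q \<sigma>)"
    using trace_norm_scaled_diff_ge[OF assms(1,2), of p q] by (simp add: abs_minus_commute)
  ultimately show ?thesis using trace_norm_scaled_diff_same[OF assms] by simp
qed

section \<open>Ensembles, couplings and the two distances\<close>

lemma has_sum_diff:
  fixes f g :: "'a \<Rightarrow> 'b::topological_ab_group_add"
  assumes "(f has_sum a) A" "(g has_sum b) A"
  shows "((\<lambda>x. f x - g x) has_sum (a - b)) A"
proof -
  have "((\<lambda>x. - g x) has_sum (- b)) A" using assms(2) by (simp add: has_sum_uminus)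
  from has_sum_add[OF assms(1) this] show ?thesis by simp
qed

lemma abs_has_sum_le:
  fixes f g :: "'a \<Rightarrow> real"
  assumes "(f has_sum a) A" "(g has_sum b) A" "\<And>x. x \<in> A \<Longrightarrow> \<bar>f x\<bar> \<le> g x"
  shows "\<bar>a\<bar> \<le> b"
proof -
  have "a \<le> b" using assms by (intro has_sum_mono[OF assms(1,2)]) (auto simp: abs_le_iff)
  moreover have "((\<lambda>x. - f x) has_sum (- a)) A" using assms(1) by (simp add: has_sum_uminus)
  then have "- a \<le> b"
    using assms by (intro has_sum_mono[OF _ assms(2)]) (auto simp: abs_le_iff)
  ultimately show ?thesis by simp
qed

lemma nonneg_has_sum_pairs:
  fixes Q :: "'a \<Rightarrow> 'b \<Rightarrow> real"
  assumes "\<And>i j. 0 \<le> Q i j" "\<And>i. ((\<lambda>j. Q i j) has_sum a i) UNIV" "(a has_sum s) UNIV"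
  shows "((\<lambda>(i, j). Q i j) has_sum s) UNIV"
proof -
  have "(\<lambda>(i, j). Q i j) summable_on UNIV \<times> UNIV"
    using assms by (intro summable_on_SigmaI[where g = a]) (auto simp: summable_on_def)
  then have "((\<lambda>(i, j). Q i j) has_sum s) (UNIV \<times> UNIV)"
    using assms by (intro has_sum_SigmaI[where g = a]) auto
  then show ?thesis by simp
qed

lemma ensemble_nonneg: "ensemble p \<rho> \<Longrightarrow> 0 \<le> p i"
  and ensemble_has_sum: "ensemble p \<rho> \<Longrightarrow> (p has_sum 1) UNIV"
  and ensemble_density: "ensemble p \<rho> \<Longrightarrow> density (\<rho> i)"
  by (simp_all add: ensemble_def)

lemma ensemble_summable_on: "ensemble p \<rho> \<Longrightarrow> p summable_on A"
  using summable_on_subset[of p UNIV A] ensemble_has_sum by (auto simp: summable_on_def)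

lemma ensemble_infsum_nonneg: "ensemble p \<rho> \<Longrightarrow> 0 \<le> infsum p A"
  by (intro infsum_nonneg) (simp add: ensemble_nonneg)

lemma ensemble_bounded_summable_on:
  assumes "ensemble p \<rho>" and M: "\<And>s. density s \<Longrightarrow> \<bar>f s\<bar> \<le> M"
  shows "(\<lambda>i. p i * f (\<rho> i)) summable_on A"
proof -
  have "(\<lambda>i. M * p i) summable_on UNIV"
    using ensemble_summable_on[OF assms(1)] by (rule summable_on_cmult_right)
  then have "(\<lambda>i. norm (p i * f (\<rho> i))) summable_on UNIV"
  proof (rule summable_on_comparison_test)
    fix i
    have "\<bar>f (\<rho> i)\<bar> * p i \<le> M * p i"
      by (rule mult_right_mono[OF M[OF ensemble_density[OF assms(1)]] ensemble_nonneg[OF assms(1)]])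
    then show "norm (p i * f (\<rho> i)) \<le> M * p i"
      by (simp add: abs_mult ensemble_nonneg[OF assms(1)] mult.commute)
  qed simp
  then show ?thesis
    by (rule summable_on_subset[OF abs_summable_summable]) simp
qed

lemma ensemble_finite_mass:
  assumes "ensemble q \<sigma>" "0 < r"
  obtains J where "finite J" "1 - r < sum q J"
proof -
  have "(sum q \<longlongrightarrow> 1) (finite_subsets_at_top UNIV)"
    using ensemble_has_sum[OF assms(1)] by (simp add: has_sum_def)
  then have "\<forall>\<^sub>F J in finite_subsets_at_top UNIV. 1 - r < sum q J"
    using assms(2) by (intro order_tendstoD(1)) auto
  then show ?thesis using that unfolding eventually_finite_subsets_at_top by blast
qed

lemma ensemble_infsum_Compl:
  assumes "ensemble q \<sigma>"
  shows "infsum q {j. \<not> P j} = 1 - infsum q {j. P j}"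
proof -
  have "infsum q ({j. P j} \<union> {j. \<not> P j}) = infsum q {j. P j} + infsum q {j. \<not> P j}"
    by (rule infsum_Un_disjoint) (auto intro: ensemble_summable_on[OF assms])
  moreover have "{j. P j} \<union> {j. \<not> P j} = UNIV" by auto
  ultimately show ?thesis using infsumI[OF ensemble_has_sum[OF assms]] by simp
qed

lemma ensemble_sum_le_infsum_image:
  assumes "ensemble q \<sigma>" "finite J"
  shows "sum q J \<le> infsum q {j. \<sigma> j \<in> \<sigma> ` J}"
  using assms by (intro finite_sum_le_infsum ensemble_summable_on) (auto simp: ensemble_nonneg)

definition ens_expect :: "(nat \<Rightarrow> real) \<Rightarrow> (nat \<Rightarrow> 'i mat) \<Rightarrow> ('i mat \<Rightarrow> real) \<Rightarrow> real" where
  "ens_expect p \<rho> f = infsum (\<lambda>i. p i * f (\<rho> i)) UNIV"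

lemma ens_expect_has_sum_fibres:
  assumes "ensemble p \<rho>" and M: "\<And>s. density s \<Longrightarrow> \<bar>f s\<bar> \<le> M"
  shows "((\<lambda>s. f s * infsum p {i. \<rho> i = s}) has_sum ens_expect p \<rho> f) UNIV"
proof -
  define g where "g = (\<lambda>i. p i * f (\<rho> i))"
  have sg: "g summable_on A" for A unfolding g_def by (rule ensemble_bounded_summable_on[OF assms])
  \<comment> \<open>index the terms by the pairs \<open>(\<rho> i, i)\<close>, which form the fibres of \<open>\<rho>\<close>\<close>
  have "inj (\<lambda>i. (\<rho> i, i))" by (auto intro: injI)
  moreover have "(\<lambda>i. (\<rho> i, i)) ` UNIV = Sigma UNIV (\<lambda>s. {i. \<rho> i = s})" by auto
  moreover have "(g has_sum ens_expect p \<rho> f) UNIV"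
    unfolding ens_expect_def g_def[symmetric] using sg[of UNIV] by simp
  ultimately have "((\<lambda>(s, i). g i) has_sum ens_expect p \<rho> f) (Sigma UNIV (\<lambda>s. {i. \<rho> i = s}))"
    using has_sum_reindex[of "\<lambda>i. (\<rho> i, i)" UNIV "\<lambda>(s, i). g i"] by (simp add: comp_def)
  then have "((\<lambda>s. infsum g {i. \<rho> i = s}) has_sum ens_expect p \<rho> f) UNIV"
    by (rule has_sum_SigmaD) (simp add: sg)
  moreover have "infsum g {i. \<rho> i = s} = f s * infsum p {i. \<rho> i = s}" for s
  proof -
    have "infsum g {i. \<rho> i = s} = infsum (\<lambda>i. f s * p i) {i. \<rho> i = s}"
      by (rule infsum_cong) (simp add: g_def mult.commute)
    also have "\<dots> = f s * infsum p {i. \<rho> i = s}"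
      using ensemble_summable_on[OF assms(1)] by (simp add: infsum_cmult_right)
    finally show ?thesis .
  qed
  ultimately show ?thesis by simp
qed

lemma same_measure_ens_expect_eq:
  assumes "same_measure p \<rho> q \<sigma>" "ensemble p \<rho>" "ensemble q \<sigma>"
    and M: "\<And>s. density s \<Longrightarrow> \<bar>f s\<bar> \<le> M"
  shows "ens_expect p \<rho> f = ens_expect q \<sigma> f"
proof -
  have "infsum p {i. \<rho> i = s} = infsum q {i. \<sigma> i = s}" for s
    using assms(1)[unfolded same_measure_def, rule_format, of "{s}"] by simp
  then have "((\<lambda>s. f s * infsum q {i. \<sigma> i = s}) has_sum ens_expect p \<rho> f) UNIV"
    using ens_expect_has_sum_fibres[of p \<rho> f M, OF assms(2) M] by simp
  then show ?thesis
    using ens_expect_has_sum_fibres[of q \<sigma> f M, OF assms(3) M] by (rule has_sum_unique)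
qed

definition transport_cost :: "(nat \<Rightarrow> nat \<Rightarrow> real) \<Rightarrow> (nat \<Rightarrow> 'i mat) \<Rightarrow> (nat \<Rightarrow> 'i mat) \<Rightarrow> real" where
  "transport_cost P \<rho> \<sigma> = infsum (\<lambda>(i, j). P i j * trace_norm (mat_diff (\<rho> i) (\<sigma> j))) UNIV"

lemma DK_eq_Inf_transport_cost: "DK p \<rho> q \<sigma> = Inf {transport_cost P \<rho> \<sigma> | P. coupling P p q} / 2"
  by (simp add: DK_def transport_cost_def)

lemma coupling_nonneg: "coupling P p q \<Longrightarrow> 0 \<le> P i j"
  by (simp add: coupling_def)

lemma coupling_transpose: "coupling P p q \<Longrightarrow> coupling (\<lambda>j i. P i j) q p"
  by (auto simp: coupling_def)

lemma normalized_product_coupling: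
  assumes "\<And>i. 0 \<le> r i" "\<And>j. 0 \<le> c j" "(r has_sum R) UNIV" "(c has_sum R) UNIV"
  shows "coupling (\<lambda>i j. r i * c j / R) r c"
proof -
  have "r i = 0" "c j = 0" if "R = 0" for i j
    using nonneg_has_sum_le_0D[OF assms(3)] nonneg_has_sum_le_0D[OF assms(4)] assms(1,2) that by auto
  moreover have "((\<lambda>j. r i / R * c j) has_sum r i / R * R) UNIV" "((\<lambda>i. r i * (c j / R)) has_sum R * (c j / R)) UNIV" for i j
    by (intro has_sum_cmult_right has_sum_cmult_left assms(3,4))+
  moreover have "0 \<le> R" using has_sum_nonneg[OF assms(3)] assms(1) by blast
  ultimately show ?thesis
    unfolding coupling_def using assms(1,2) by (cases "R = 0") (auto simp: mult.commute)
qed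

lemma product_coupling:
  assumes "ensemble p \<rho>" "ensemble q \<sigma>"
  shows "coupling (\<lambda>i j. p i * q j) p q"
  using normalized_product_coupling[OF _ _ ensemble_has_sum[OF assms(1)] ensemble_has_sum[OF assms(2)]]
  by (simp add: ensemble_nonneg[OF assms(1)] ensemble_nonneg[OF assms(2)])

lemma coupling_add:
  assumes "coupling P p q" "coupling P' p' q'"
  shows "coupling (\<lambda>i j. P i j + P' i j) (\<lambda>i. p i + p' i) (\<lambda>j. q j + q' j)"
  using assms by (auto simp: coupling_def intro: has_sum_add)

lemma coupling_has_sum_pairs:
  assumes "coupling P p q" "(p has_sum m) UNIV"
  shows "((\<lambda>(i, j). P i j) has_sum m) UNIV"
  using assms by (intro nonneg_has_sum_pairs[where a = p]) (auto simp: coupling_def)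

lemma coupling_has_sum_fst:
  assumes "coupling P p q" "(q has_sum m) UNIV"
  shows "(p has_sum m) UNIV"
proof -
  have "((\<lambda>(j, i). P i j) has_sum m) (UNIV \<times> UNIV)"
    using coupling_has_sum_pairs[OF coupling_transpose[OF assms(1)] assms(2)] by simp
  then have "((\<lambda>(i, j). P i j) has_sum m) (Sigma UNIV (\<lambda>_. UNIV))"
    by (subst (asm) has_sum_swap) simp
  then show ?thesis
    by (rule has_sum_SigmaD) (use assms(1) in \<open>auto simp: coupling_def\<close>)
qed

lemma coupling_has_sum_1:
  "coupling P p q \<Longrightarrow> ensemble p \<rho> \<Longrightarrow> ((\<lambda>(i, j). P i j) has_sum 1) UNIV"
  by (intro coupling_has_sum_pairs ensemble_has_sum)

lemma coupling_bounded_summable_on: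
  assumes "coupling P p q" "ensemble p \<rho>" "\<And>i j. \<bar>g i j\<bar> \<le> C"
  shows "(\<lambda>(i, j). P i j * g i j) summable_on A"
proof -
  have "(\<lambda>(i, j). C * P i j) summable_on UNIV"
    using has_sum_cmult_right[OF coupling_has_sum_1[OF assms(1,2)], of C]
    by (auto simp: summable_on_def case_prod_unfold)
  then have "(\<lambda>x. norm ((\<lambda>(i, j). P i j * g i j) x)) summable_on UNIV"
  proof (rule summable_on_comparison_test)
    fix x :: "nat \<times> nat"
    obtain i j where x: "x = (i, j)" by fastforce
    have "P i j * \<bar>g i j\<bar> \<le> P i j * C"
      by (rule mult_left_mono[OF assms(3) coupling_nonneg[OF assms(1)]])
    then show "norm ((\<lambda>(i, j). P i j * g i j) x) \<le> (\<lambda>(i, j). C * P i j) x"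
      by (simp add: x abs_mult coupling_nonneg[OF assms(1)] mult.commute)
  qed simp
  then show ?thesis
    by (rule summable_on_subset[OF abs_summable_summable]) simp
qed

lemma coupling_infsum_fst:
  assumes "coupling P p q" "ensemble p \<rho>"
  shows "infsum (\<lambda>(i, j). P i j) (I \<times> UNIV) = infsum p I"
proof -
  have "(\<lambda>(i, j). P i j) summable_on I \<times> UNIV"
    using coupling_has_sum_1[OF assms] summable_on_subset[of "\<lambda>(i, j). P i j" UNIV "I \<times> UNIV"]
    by (auto simp: summable_on_def)
  then have "((\<lambda>(i, j). P i j) has_sum infsum (\<lambda>(i, j). P i j) (I \<times> UNIV)) (I \<times> UNIV)"
    by (rule has_sum_infsum)
  then have "(p has_sum infsum (\<lambda>(i, j). P i j) (I \<times> UNIV)) I"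
    by (rule has_sum_SigmaD) (use assms(1) in \<open>auto simp: coupling_def\<close>)
  then show ?thesis by (simp add: infsumI)
qed

lemma same_measure_coupling_fst:
  assumes "coupling P p q" "ensemble p \<rho>" "bij d"
  shows "same_measure (\<lambda>k. P (fst (d k)) (snd (d k))) (\<lambda>k. \<rho> (fst (d k))) p \<rho>"
  unfolding same_measure_def
proof
  fix A
  have "infsum (\<lambda>k. P (fst (d k)) (snd (d k))) {k. \<rho> (fst (d k)) \<in> A}
      = infsum ((\<lambda>(i, j). P i j) \<circ> d) (d -` ({i. \<rho> i \<in> A} \<times> UNIV))"
    by (simp add: vimage_def case_prod_unfold comp_def mem_Times_iff)
  also have "\<dots> = infsum (\<lambda>(i, j). P i j) ({i. \<rho> i \<in> A} \<times> UNIV)"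
    using infsum_reindex[of d "d -` ({i. \<rho> i \<in> A} \<times> UNIV)" "\<lambda>(i, j). P i j"] assms(3)
    by (simp add: bij_is_surj surj_image_vimage_eq inj_on_subset[OF bij_is_inj])
  also have "\<dots> = infsum p {i. \<rho> i \<in> A}"
    by (rule coupling_infsum_fst[OF assms(1,2)])
  finally show "infsum (\<lambda>k. P (fst (d k)) (snd (d k))) {k. \<rho> (fst (d k)) \<in> A} = infsum p {i. \<rho> i \<in> A}" .
qed

lemma D0_nonneg: "ensemble p \<rho> \<Longrightarrow> ensemble q \<sigma> \<Longrightarrow> 0 \<le> D0 p \<rho> q \<sigma>"
  unfolding D0_def by (auto intro!: infsum_nonneg trace_norm_scaled_diff_nonneg ensemble_density)

lemma D0_has_sum:
  assumes e1: "ensemble p \<rho>" and e2: "ensemble q \<sigma>"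
  shows "((\<lambda>k. trace_norm (scaled_diff (p k) (\<rho> k) (q k) (\<sigma> k))) has_sum 2 * D0 p \<rho> q \<sigma>) UNIV"
proof -
  have "(\<lambda>k. p k + q k) summable_on UNIV"
    using has_sum_add[OF ensemble_has_sum[OF e1] ensemble_has_sum[OF e2]] by (auto simp: summable_on_def)
  then have "(\<lambda>k. trace_norm (scaled_diff (p k) (\<rho> k) (q k) (\<sigma> k))) summable_on UNIV"
  proof (rule summable_on_comparison_test)
    fix k
    show "trace_norm (scaled_diff (p k) (\<rho> k) (q k) (\<sigma> k)) \<le> p k + q k"
      using trace_norm_scaled_diff_le[OF ensemble_density[OF e1] ensemble_density[OF e2], of "p k" k "q k" k]
        ensemble_nonneg[OF e1, of k] ensemble_nonneg[OF e2, of k] by simp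
    show "0 \<le> trace_norm (scaled_diff (p k) (\<rho> k) (q k) (\<sigma> k))"
      by (rule trace_norm_scaled_diff_nonneg[OF ensemble_density[OF e1] ensemble_density[OF e2]])
  qed
  then show ?thesis by (simp add: D0_def)
qed

lemma Dstar_le_D0:
  assumes "ensemble p' \<rho>'" "same_measure p' \<rho>' p \<rho>" "ensemble q' \<sigma>'" "same_measure q' \<sigma>' q \<sigma>"
  shows "Dstar p \<rho> q \<sigma> \<le> D0 p' \<rho>' q' \<sigma>'"
  unfolding Dstar_def
  by (rule cInf_lower) (use assms D0_nonneg in \<open>auto intro!: bdd_belowI[of _ 0]\<close>)

lemma Dstar_nonneg:
  assumes "ensemble p \<rho>" "ensemble q \<sigma>"
  shows "0 \<le> Dstar p \<rho> q \<sigma>"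
  unfolding Dstar_def using assms
  by (intro cInf_greatest) (auto simp: same_measure_def intro: D0_nonneg)

lemma Dstar_lessD:
  assumes "ensemble p \<rho>" "ensemble q \<sigma>" "Dstar p \<rho> q \<sigma> < c"
  obtains p' \<rho>' q' \<sigma>' where "ensemble p' \<rho>'" "same_measure p' \<rho>' p \<rho>"
    "ensemble q' \<sigma>'" "same_measure q' \<sigma>' q \<sigma>" "D0 p' \<rho>' q' \<sigma>' < c"
proof -
  have "D0 p \<rho> q \<sigma> \<in> {D0 p' \<rho>' q' \<sigma>' | p' \<rho>' q' \<sigma>'. ensemble p' \<rho>' \<and> same_measure p' \<rho>' p \<rho>
      \<and> ensemble q' \<sigma>' \<and> same_measure q' \<sigma>' q \<sigma>}"
    using assms by (auto simp: same_measure_def)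
  from cInf_lessD[OF _ assms(3)[unfolded Dstar_def]] this that show ?thesis by blast
qed

lemma abs_trace_norm_diff_ensembles_le_2:
  "ensemble p \<rho> \<Longrightarrow> ensemble q \<sigma> \<Longrightarrow> \<bar>trace_norm (mat_diff (\<rho> i) (\<sigma> j))\<bar> \<le> 2"
  using trace_norm_diff_le_2 trace_norm_diff_nonneg ensemble_density by (metis abs_of_nonneg)

lemma transport_cost_nonneg:
  assumes "ensemble p \<rho>" "ensemble q \<sigma>" "coupling P p q"
  shows "0 \<le> transport_cost P \<rho> \<sigma>"
proof -
  have "0 \<le> P i j * trace_norm (mat_diff (\<rho> i) (\<sigma> j))" for i j
    using coupling_nonneg[OF assms(3)] assms(1,2) by (simp add: ensemble_density trace_norm_diff_nonneg)
  then show ?thesis unfolding transport_cost_def by (auto intro: infsum_nonneg)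
qed

lemma transport_cost_has_sum:
  assumes "ensemble p \<rho>" "ensemble q \<sigma>" "coupling P p q"
  shows "((\<lambda>(i, j). P i j * trace_norm (mat_diff (\<rho> i) (\<sigma> j))) has_sum transport_cost P \<rho> \<sigma>) UNIV"
  unfolding transport_cost_def
  by (intro has_sum_infsum coupling_bounded_summable_on[OF assms(3,1), where C = 2]
      abs_trace_norm_diff_ensembles_le_2[OF assms(1,2)])

lemma transport_costs_bdd_below:
  assumes "ensemble p \<rho>" "ensemble q \<sigma>"
  shows "bdd_below {transport_cost P \<rho> \<sigma> | P. coupling P p q}"
  using transport_cost_nonneg[OF assms] by (auto intro: bdd_belowI[of _ 0])

lemma DK_le_transport_cost:
  assumes "ensemble p \<rho>" "ensemble q \<sigma>" "coupling P p q"
  shows "DK p \<rho> q \<sigma> \<le> transport_cost P \<rho> \<sigma> / 2"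
  unfolding DK_eq_Inf_transport_cost
  using cInf_lower[OF _ transport_costs_bdd_below[OF assms(1,2)]] assms(3) by (auto intro: divide_right_mono)

lemma DK_nonneg:
  assumes "ensemble p \<rho>" "ensemble q \<sigma>"
  shows "0 \<le> DK p \<rho> q \<sigma>"
  unfolding DK_eq_Inf_transport_cost
  using product_coupling[OF assms] transport_cost_nonneg[OF assms]
  by (auto intro!: cInf_greatest divide_nonneg_pos)

lemma Dstar_le_transport_cost:
  assumes "ensemble p \<rho>" "ensemble q \<sigma>" "coupling P p q"
  shows "Dstar p \<rho> q \<sigma> \<le> transport_cost P \<rho> \<sigma> / 2"
proof -
  \<comment> \<open>realize the coupling as a pair of ensembles indexed by the pairs \<open>(i, j)\<close>, enumerated by \<open>prod_decode\<close>\<close>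
  define d where "d = (prod_decode :: nat \<Rightarrow> nat \<times> nat)"
  define p' where "p' = (\<lambda>k. P (fst (d k)) (snd (d k)))"
  define \<rho>' \<sigma>' where "\<rho>' = (\<lambda>k. \<rho> (fst (d k)))" and "\<sigma>' = (\<lambda>k. \<sigma> (snd (d k)))"
  have d: "bij d" unfolding d_def by (rule bij_prod_decode)
  have "(p' has_sum 1) UNIV"
    using coupling_has_sum_1[OF assms(3,1)] has_sum_reindex_bij_betw[OF d, of "\<lambda>(i, j). P i j"]
    by (simp add: p'_def case_prod_unfold)
  then have e1: "ensemble p' \<rho>'" and e2: "ensemble p' \<sigma>'"
    using assms by (auto simp: ensemble_def p'_def \<rho>'_def \<sigma>'_def coupling_nonneg ensemble_density)
  have sm1: "same_measure p' \<rho>' p \<rho>"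
    unfolding p'_def \<rho>'_def by (rule same_measure_coupling_fst[OF assms(3,1) d])
  have "same_measure (\<lambda>k. P (snd (prod.swap (d k))) (fst (prod.swap (d k)))) (\<lambda>k. \<sigma> (fst (prod.swap (d k)))) q \<sigma>"
    using same_measure_coupling_fst[OF coupling_transpose[OF assms(3)] assms(2), of "prod.swap \<circ> d"] d
    by (simp add: bij_comp)
  then have sm2: "same_measure p' \<sigma>' q \<sigma>"
    by (simp add: p'_def \<sigma>'_def)
  have "D0 p' \<rho>' p' \<sigma>' = infsum (\<lambda>k. p' k * trace_norm (mat_diff (\<rho>' k) (\<sigma>' k))) UNIV / 2"
    unfolding D0_def using e1 e2
    by (simp add: trace_norm_scaled_diff_same ensemble_density ensemble_nonneg)
  also have "\<dots> = transport_cost P \<rho> \<sigma> / 2"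
    unfolding transport_cost_def
    using infsum_reindex_bij_betw[OF d, of "\<lambda>(i, j). P i j * trace_norm (mat_diff (\<rho> i) (\<sigma> j))"]
    by (simp add: p'_def \<rho>'_def \<sigma>'_def case_prod_unfold)
  finally show ?thesis using Dstar_le_D0[OF e1 sm1 e2 sm2] by simp
qed

lemma Dstar_le_DK:
  assumes "ensemble p \<rho>" "ensemble q \<sigma>"
  shows "Dstar p \<rho> q \<sigma> \<le> DK p \<rho> q \<sigma>"
  unfolding DK_eq_Inf_transport_cost
  using product_coupling[OF assms] Dstar_le_transport_cost[OF assms]
  by (auto intro!: cInf_greatest simp: le_divide_eq)

section \<open>Convergence in \<open>D\<^sub>*\<close> implies weak convergence\<close>

lemma bounded_cont_states_bound:
  assumes "bounded_cont_states f"
  obtains M where "0 \<le> M" "\<And>s. density s \<Longrightarrow> \<bar>f s\<bar> \<le> M"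
proof -
  obtain B where "\<forall>\<rho>. density \<rho> \<longrightarrow> \<bar>f \<rho>\<bar> \<le> B"
    using assms unfolding bounded_cont_states_def by blast
  then show ?thesis using that[of "max B 0"] by force
qed

lemma bounded_cont_states_uniform_on_finite:
  assumes "bounded_cont_states f" "finite S" "\<And>s. s \<in> S \<Longrightarrow> density s" "0 < e"
  obtains d where "0 < d"
    "\<And>s x. s \<in> S \<Longrightarrow> density x \<Longrightarrow> trace_norm (mat_diff x s) < d \<Longrightarrow> \<bar>f x - f s\<bar> < e"
proof -
  have "\<exists>d>0. \<forall>s\<in>S. \<forall>x. density x \<longrightarrow> trace_norm (mat_diff x s) < d \<longrightarrow> \<bar>f x - f s\<bar> < e"
    using assms(2,3)
  proof (induction S rule: finite_induct)
    case (insert a S)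
    obtain d1 where "0 < d1" "\<forall>s\<in>S. \<forall>x. density x \<longrightarrow> trace_norm (mat_diff x s) < d1 \<longrightarrow> \<bar>f x - f s\<bar> < e"
      using insert by auto
    moreover obtain d2 where "0 < d2" "\<forall>x. density x \<longrightarrow> trace_norm (mat_diff x a) < d2 \<longrightarrow> \<bar>f x - f a\<bar> < e"
      using assms(1,4) insert.prems unfolding bounded_cont_states_def by blast
    ultimately show ?case by (intro exI[of _ "min d1 d2"]) auto
  qed (auto intro: exI[of _ 1])
  then show ?thesis using that by blast
qed

lemma weighted_value_diff_le:
  fixes x y :: "'i::countable mat"
  assumes dx: "density x" and dy: "density y" and "0 \<le> q"
    and M: "\<And>s. density s \<Longrightarrow> \<bar>f s\<bar> \<le> M" and "0 < \<delta>" "0 \<le> \<epsilon>"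
    and near: "y \<in> S \<Longrightarrow> trace_norm (mat_diff x y) < \<delta> \<Longrightarrow> \<bar>f x - f y\<bar> < \<epsilon>"
  shows "q * \<bar>f x - f y\<bar>
    \<le> \<epsilon> * q + 2 * M * (if y \<in> S then 0 else q) + (4 * M / \<delta>) * trace_norm (scaled_diff p x q y)"
proof -
  define t u where "t = trace_norm (scaled_diff p x q y)" and "u = trace_norm (mat_diff x y)"
  have "0 \<le> M" using M[OF dx] by simp
  have "0 \<le> \<epsilon> * q" "0 \<le> (4 * M / \<delta>) * t"
    using \<open>0 \<le> \<epsilon>\<close> \<open>0 \<le> q\<close> \<open>0 \<le> M\<close> \<open>0 < \<delta>\<close> trace_norm_scaled_diff_nonneg[OF dx dy]
    by (simp_all add: t_def)
  have f_diff: "q * \<bar>f x - f y\<bar> \<le> q * (2 * M)"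
    using M[OF dx] M[OF dy] \<open>0 \<le> q\<close> by (intro mult_left_mono) auto
  consider "y \<notin> S" | "y \<in> S" "u < \<delta>" | "y \<in> S" "\<delta> \<le> u" by fastforce
  then show ?thesis
  proof cases
    case 1
    then show ?thesis using f_diff \<open>0 \<le> \<epsilon> * q\<close> \<open>0 \<le> (4 * M / \<delta>) * t\<close> by (simp add: t_def mult_ac)
  next
    case 2
    then have "q * \<bar>f x - f y\<bar> \<le> q * \<epsilon>"
      using near \<open>0 \<le> q\<close> unfolding u_def by (intro mult_left_mono) auto
    then show ?thesis using 2 \<open>0 \<le> (4 * M / \<delta>) * t\<close> by (simp add: t_def mult.commute)
  next
    case 3
    \<comment> \<open>far from \<open>y\<close>, the weight \<open>q\<close> is controlled by the trace distance\<close>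
    have "q * 1 \<le> q * (u / \<delta>)"
      using 3 \<open>0 < \<delta>\<close> \<open>0 \<le> q\<close> by (intro mult_left_mono) auto
    then have "q * (2 * M) \<le> q * (u / \<delta>) * (2 * M)"
      using \<open>0 \<le> M\<close> mult_right_mono[of "q * 1" "q * (u / \<delta>)" "2 * M"] by simp
    with f_diff have "q * \<bar>f x - f y\<bar> \<le> q * (u / \<delta>) * (2 * M)" by linarith
    also have "\<dots> \<le> (2 * t / \<delta>) * (2 * M)"
      using trace_norm_diff_le_scaled_diff[OF dx dy \<open>0 \<le> q\<close>, of p] \<open>0 < \<delta>\<close> \<open>0 \<le> M\<close>
      by (intro mult_right_mono) (auto simp: t_def u_def divide_right_mono)
    also have "\<dots> = (4 * M / \<delta>) * t" by simp
    finally show ?thesis using 3 \<open>0 \<le> \<epsilon> * q\<close> by (simp add: t_def)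
  qed
qed

lemma scaled_value_diff_le:
  fixes x y :: "'i::countable mat"
  assumes dx: "density x" and dy: "density y" and "0 \<le> q"
    and M: "\<And>s. density s \<Longrightarrow> \<bar>f s\<bar> \<le> M" and "0 < \<delta>" "0 \<le> \<epsilon>"
    and near: "y \<in> S \<Longrightarrow> trace_norm (mat_diff x y) < \<delta> \<Longrightarrow> \<bar>f x - f y\<bar> < \<epsilon>"
  shows "\<bar>p * f x - q * f y\<bar>
    \<le> \<epsilon> * q + 2 * M * (if y \<in> S then 0 else q) + (M + 4 * M / \<delta>) * trace_norm (scaled_diff p x q y)"
proof -
  define t where "t = trace_norm (scaled_diff p x q y)"
  have "\<bar>p - q\<bar> * \<bar>f x\<bar> \<le> t * M"
    using mult_mono[OF trace_norm_scaled_diff_ge[OF dx dy, of p q] M[OF dx] _ abs_ge_zero]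
      trace_norm_scaled_diff_nonneg[OF dx dy, of p q] by (simp add: t_def)
  moreover have "p * f x - q * f y = (p - q) * f x + q * (f x - f y)"
    by (simp add: algebra_simps)
  then have "\<bar>p * f x - q * f y\<bar> \<le> \<bar>p - q\<bar> * \<bar>f x\<bar> + q * \<bar>f x - f y\<bar>"
    using abs_triangle_ineq[of "(p - q) * f x" "q * (f x - f y)"] \<open>0 \<le> q\<close> by (simp add: abs_mult)
  moreover have "q * \<bar>f x - f y\<bar> \<le> \<epsilon> * q + 2 * M * (if y \<in> S then 0 else q) + (4 * M / \<delta>) * t"
    unfolding t_def by (rule weighted_value_diff_le[OF dx dy \<open>0 \<le> q\<close> M \<open>0 < \<delta>\<close> \<open>0 \<le> \<epsilon>\<close> near])
  moreover have "(M + 4 * M / \<delta>) * t = t * M + (4 * M / \<delta>) * t"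
    by (simp add: algebra_simps)
  ultimately show ?thesis unfolding t_def by linarith
qed

lemma ens_expect_diff_le_D0:
  fixes \<rho> \<sigma> :: "nat \<Rightarrow> 'i::countable mat"
  assumes e1: "ensemble p \<rho>" and e2: "ensemble q \<sigma>"
    and M: "\<And>s. density s \<Longrightarrow> \<bar>f s\<bar> \<le> M" and "0 < \<delta>" "0 \<le> \<epsilon>"
    and near: "\<And>k. \<sigma> k \<in> S \<Longrightarrow> trace_norm (mat_diff (\<rho> k) (\<sigma> k)) < \<delta> \<Longrightarrow> \<bar>f (\<rho> k) - f (\<sigma> k)\<bar> < \<epsilon>"
  shows "\<bar>ens_expect p \<rho> f - ens_expect q \<sigma> f\<bar>
    \<le> \<epsilon> + 2 * M * infsum q {k. \<sigma> k \<notin> S} + 2 * (M + 4 * M / \<delta>) * D0 p \<rho> q \<sigma>"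
proof -
  define K where "K = M + 4 * M / \<delta>"
  define t where "t = (\<lambda>k. trace_norm (scaled_diff (p k) (\<rho> k) (q k) (\<sigma> k)))"
  have "((\<lambda>k. p k * f (\<rho> k) - q k * f (\<sigma> k)) has_sum (ens_expect p \<rho> f - ens_expect q \<sigma> f)) UNIV"
    unfolding ens_expect_def
    by (intro has_sum_diff has_sum_infsum ensemble_bounded_summable_on[OF e1 M]
        ensemble_bounded_summable_on[OF e2 M])
  moreover have "((\<lambda>k. \<epsilon> * q k + 2 * M * (if \<sigma> k \<in> S then 0 else q k) + K * t k)
      has_sum (\<epsilon> + 2 * M * infsum q {k. \<sigma> k \<notin> S} + 2 * K * D0 p \<rho> q \<sigma>)) UNIV"
  proof (intro has_sum_add)
    show "((\<lambda>k. \<epsilon> * q k) has_sum \<epsilon>) UNIV"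
      using has_sum_cmult_right[OF ensemble_has_sum[OF e2], of \<epsilon>] by simp
    have "(q has_sum infsum q {k. \<sigma> k \<notin> S}) {k. \<sigma> k \<notin> S}"
      by (intro has_sum_infsum ensemble_summable_on[OF e2])
    then have "((\<lambda>k. if \<sigma> k \<in> S then 0 else q k) has_sum infsum q {k. \<sigma> k \<notin> S}) UNIV"
      by (rule has_sum_cong_neutral[THEN iffD1, rotated -1]) auto
    then show "((\<lambda>k. 2 * M * (if \<sigma> k \<in> S then 0 else q k)) has_sum 2 * M * infsum q {k. \<sigma> k \<notin> S}) UNIV"
      by (rule has_sum_cmult_right)
    show "((\<lambda>k. K * t k) has_sum 2 * K * D0 p \<rho> q \<sigma>) UNIV"
      using has_sum_cmult_right[OF D0_has_sum[OF e1 e2], of K] by (simp add: t_def mult_ac)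
  qed
  moreover have "\<bar>p k * f (\<rho> k) - q k * f (\<sigma> k)\<bar> \<le> \<epsilon> * q k + 2 * M * (if \<sigma> k \<in> S then 0 else q k) + K * t k" for k
    unfolding K_def t_def
    by (rule scaled_value_diff_le[OF ensemble_density[OF e1] ensemble_density[OF e2] ensemble_nonneg[OF e2]
          M \<open>0 < \<delta>\<close> \<open>0 \<le> \<epsilon>\<close> near])
  ultimately show ?thesis unfolding K_def by (rule abs_has_sum_le)
qed

lemma ens_expect_diff_le_of_Dstar_less:
  fixes \<rho> \<sigma> :: "nat \<Rightarrow> 'i::countable mat"
  assumes e1: "ensemble p \<rho>" and e2: "ensemble q \<sigma>"
    and M: "\<And>s. density s \<Longrightarrow> \<bar>f s\<bar> \<le> M" and "0 < \<delta>" "0 \<le> \<epsilon>"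
    and near: "\<And>s x. s \<in> S \<Longrightarrow> density x \<Longrightarrow> trace_norm (mat_diff x s) < \<delta> \<Longrightarrow> \<bar>f x - f s\<bar> < \<epsilon>"
    and "Dstar p \<rho> q \<sigma> < \<eta>"
  shows "\<bar>ens_expect p \<rho> f - ens_expect q \<sigma> f\<bar>
    \<le> \<epsilon> + 2 * M * infsum q {k. \<sigma> k \<notin> S} + 2 * (M + 4 * M / \<delta>) * \<eta>"
proof -
  obtain p' \<rho>' q' \<sigma>' where E: "ensemble p' \<rho>'" "same_measure p' \<rho>' p \<rho>"
    "ensemble q' \<sigma>'" "same_measure q' \<sigma>' q \<sigma>" and "D0 p' \<rho>' q' \<sigma>' < \<eta>"
    using Dstar_lessD[OF e1 e2 \<open>Dstar p \<rho> q \<sigma> < \<eta>\<close>] by blast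
  have "0 \<le> M + 4 * M / \<delta>" using M[OF ensemble_density[OF e1, of 0]] \<open>0 < \<delta>\<close> by simp
  then have "2 * (M + 4 * M / \<delta>) * D0 p' \<rho>' q' \<sigma>' \<le> 2 * (M + 4 * M / \<delta>) * \<eta>"
    using \<open>D0 p' \<rho>' q' \<sigma>' < \<eta>\<close> by (intro mult_left_mono) auto
  moreover have "ens_expect p' \<rho>' f = ens_expect p \<rho> f" "ens_expect q' \<sigma>' f = ens_expect q \<sigma> f"
    using same_measure_ens_expect_eq[OF E(2,1) e1 M] same_measure_ens_expect_eq[OF E(4,3) e2 M] by auto
  moreover have "infsum q' {k. \<sigma>' k \<notin> S} = infsum q {k. \<sigma> k \<notin> S}"
    using E(4)[unfolded same_measure_def, rule_format, of "- S"] by simp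
  moreover have "\<bar>ens_expect p' \<rho>' f - ens_expect q' \<sigma>' f\<bar>
      \<le> \<epsilon> + 2 * M * infsum q' {k. \<sigma>' k \<notin> S} + 2 * (M + 4 * M / \<delta>) * D0 p' \<rho>' q' \<sigma>'"
    by (rule ens_expect_diff_le_D0[OF E(1,3)])
      (use M \<open>0 < \<delta>\<close> \<open>0 \<le> \<epsilon>\<close> near ensemble_density[OF E(1)] in auto)
  ultimately show ?thesis by simp
qed

lemma ens_expect_continuous_Dstar:
  assumes e0: "ensemble q \<sigma>" and "bounded_cont_states f" and "0 < r"
  obtains \<eta> where "0 < \<eta>"
    "\<And>p \<rho>. ensemble p \<rho> \<Longrightarrow> Dstar p \<rho> q \<sigma> < \<eta> \<Longrightarrow> \<bar>ens_expect p \<rho> f - ens_expect q \<sigma> f\<bar> < r"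
proof -
  obtain M where "0 \<le> M" and M: "\<And>s. density s \<Longrightarrow> \<bar>f s\<bar> \<le> M"
    using bounded_cont_states_bound[OF assms(2)] by blast
  obtain J where "finite J" and J: "1 - r / (8 * (M + 1)) < sum q J"
    using ensemble_finite_mass[OF e0, of "r / (8 * (M + 1))"] \<open>0 < r\<close> \<open>0 \<le> M\<close> by auto
  define S where "S = \<sigma> ` J"
  obtain \<delta> where "0 < \<delta>"
    and \<delta>: "\<And>s x. s \<in> S \<Longrightarrow> density x \<Longrightarrow> trace_norm (mat_diff x s) < \<delta> \<Longrightarrow> \<bar>f x - f s\<bar> < r / 4"
    using bounded_cont_states_uniform_on_finite[OF assms(2), of S "r / 4"] \<open>finite J\<close> \<open>0 < r\<close>
      ensemble_density[OF e0] by (auto simp: S_def)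
  define K where "K = M + 4 * M / \<delta>"
  have "0 \<le> K" using \<open>0 \<le> M\<close> \<open>0 < \<delta>\<close> by (simp add: K_def)
  have "infsum q {k. \<sigma> k \<notin> S} \<le> r / (8 * (M + 1))"
    using ensemble_infsum_Compl[OF e0, of "\<lambda>k. \<sigma> k \<in> S"]
      ensemble_sum_le_infsum_image[OF e0 \<open>finite J\<close>] J by (simp add: S_def)
  then have "2 * M * infsum q {k. \<sigma> k \<notin> S} \<le> 2 * M * (r / (8 * (M + 1)))"
    using \<open>0 \<le> M\<close> by (intro mult_left_mono) auto
  also have "\<dots> \<le> r / 4"
    using \<open>0 \<le> M\<close> \<open>0 < r\<close> by (simp add: field_simps)
  finally have tail: "2 * M * infsum q {k. \<sigma> k \<notin> S} \<le> r / 4" .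
  have small: "2 * K * (r / (8 * (K + 1))) \<le> r / 4"
    using \<open>0 \<le> K\<close> \<open>0 < r\<close> by (simp add: field_simps)
  show ?thesis
  proof
    show "0 < r / (8 * (K + 1))" using \<open>0 < r\<close> \<open>0 \<le> K\<close> by simp
  next
    fix p \<rho> assume "ensemble p \<rho>" "Dstar p \<rho> q \<sigma> < r / (8 * (K + 1))"
    from ens_expect_diff_le_of_Dstar_less[OF this(1) e0 M \<open>0 < \<delta>\<close> _ \<delta> this(2)] \<open>0 < r\<close>
    have "\<bar>ens_expect p \<rho> f - ens_expect q \<sigma> f\<bar>
        \<le> r / 4 + 2 * M * infsum q {k. \<sigma> k \<notin> S} + 2 * K * (r / (8 * (K + 1)))"
      unfolding K_def by simp
    then show "\<bar>ens_expect p \<rho> f - ens_expect q \<sigma> f\<bar> < r"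
      using tail small \<open>0 < r\<close> by linarith
  qed
qed

lemma Dstar_tendsto_imp_ens_expect_tendsto:
  assumes "ensemble p0 \<rho>0" "\<And>n. ensemble (p n) (\<rho> n)"
    and "(\<lambda>n. Dstar (p n) (\<rho> n) p0 \<rho>0) \<longlonglongrightarrow> 0" and "bounded_cont_states f"
  shows "(\<lambda>n. ens_expect (p n) (\<rho> n) f) \<longlonglongrightarrow> ens_expect p0 \<rho>0 f"
proof (rule tendstoI)
  fix r :: real assume "0 < r"
  then obtain \<eta> where "0 < \<eta>" and \<eta>: "\<And>p \<rho>. ensemble p \<rho> \<Longrightarrow> Dstar p \<rho> p0 \<rho>0 < \<eta>
      \<Longrightarrow> \<bar>ens_expect p \<rho> f - ens_expect p0 \<rho>0 f\<bar> < r"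
    using ens_expect_continuous_Dstar[OF assms(1,4)] by blast
  show "\<forall>\<^sub>F n in sequentially. dist (ens_expect (p n) (\<rho> n) f) (ens_expect p0 \<rho>0 f) < r"
    using order_tendstoD(2)[OF assms(3) \<open>0 < \<eta>\<close>] by eventually_elim (simp add: dist_real_def \<eta> assms(2))
qed

section \<open>Weak convergence implies convergence in \<open>D\<^sub>K\<close>\<close>

lemma DK_le_sub_coupling:
  assumes e1: "ensemble p \<rho>" and e2: "ensemble q \<sigma>"
    and Q: "coupling Q a b" "\<And>i. a i \<le> p i" "\<And>j. b j \<le> q j" "(b has_sum m) UNIV"
    and near: "\<And>i j. 0 < Q i j \<Longrightarrow> trace_norm (mat_diff (\<rho> i) (\<sigma> j)) \<le> \<delta>" and "0 \<le> \<delta>"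
  shows "DK p \<rho> q \<sigma> \<le> \<delta> / 2 + (1 - m)"
proof -
  \<comment> \<open>complete \<open>Q\<close> by the normalized product of the unmatched masses, which are transported at cost \<open>\<le> 2\<close>\<close>
  define r c where "r = (\<lambda>i. p i - a i)" and "c = (\<lambda>j. q j - b j)"
  define R where "R = 1 - m"
  have a: "(a has_sum m) UNIV" by (rule coupling_has_sum_fst[OF Q(1,4)])
  then have r: "(r has_sum R) UNIV" and c: "(c has_sum R) UNIV"
    unfolding r_def c_def R_def using has_sum_diff ensemble_has_sum e1 e2 Q(4) by blast+
  have "0 \<le> r i" "0 \<le> c j" for i j using Q(2,3) by (simp_all add: r_def c_def)
  then have rc: "coupling (\<lambda>i j. r i * c j / R) r c"
    by (rule normalized_product_coupling[OF _ _ r c])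
  define P where "P = (\<lambda>i j. Q i j + r i * c j / R)"
  have P: "coupling P p q"
    using coupling_add[OF Q(1) rc] by (simp add: P_def r_def c_def)
  have "((\<lambda>(i, j). \<delta> * Q i j + 2 * (r i * c j / R)) has_sum (\<delta> * m + 2 * R)) UNIV"
    using has_sum_add[OF has_sum_cmult_right[OF coupling_has_sum_pairs[OF Q(1) a]]
        has_sum_cmult_right[OF coupling_has_sum_pairs[OF rc r]], of \<delta> 2]
    by (simp add: case_prod_unfold)
  moreover have "P i j * trace_norm (mat_diff (\<rho> i) (\<sigma> j)) \<le> \<delta> * Q i j + 2 * (r i * c j / R)" for i j
  proof -
    have "Q i j * trace_norm (mat_diff (\<rho> i) (\<sigma> j)) \<le> \<delta> * Q i j"
      using near[of i j] coupling_nonneg[OF Q(1), of i j] by (cases "Q i j = 0") (auto simp: mult.commute)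
    moreover have "r i * c j / R * trace_norm (mat_diff (\<rho> i) (\<sigma> j)) \<le> 2 * (r i * c j / R)"
      using mult_left_mono[OF trace_norm_diff_le_2[OF ensemble_density[OF e1] ensemble_density[OF e2]]
          coupling_nonneg[OF rc, of i j], of i j]
      by (simp add: mult.commute)
    ultimately show ?thesis by (simp add: P_def distrib_right)
  qed
  ultimately have "transport_cost P \<rho> \<sigma> \<le> \<delta> * m + 2 * R"
    using transport_cost_has_sum[OF e1 e2 P] by (auto intro: has_sum_mono)
  moreover have "m \<le> 1"
    using has_sum_mono[OF Q(4) ensemble_has_sum[OF e2]] Q(3) by simp
  ultimately show ?thesis
    using DK_le_transport_cost[OF e1 e2 P] \<open>0 \<le> \<delta>\<close> mult_left_le[of m \<delta>] by (simp add: R_def)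
qed

definition bump :: "real \<Rightarrow> 'i mat \<Rightarrow> 'i mat \<Rightarrow> real" where
  "bump \<delta> s x = max 0 (1 - trace_norm (mat_diff x s) / \<delta>)"

lemma bump_nonneg: "0 \<le> bump \<delta> s x"
  by (simp add: bump_def)

lemma bump_le_1: "0 < \<delta> \<Longrightarrow> density x \<Longrightarrow> density s \<Longrightarrow> bump \<delta> s x \<le> 1"
  using trace_norm_diff_nonneg[of x s] by (auto simp: bump_def)

lemma abs_bump_le_1: "0 < \<delta> \<Longrightarrow> density x \<Longrightarrow> density s \<Longrightarrow> \<bar>bump \<delta> s x\<bar> \<le> 1"
  using bump_le_1[of \<delta> x s] bump_nonneg[of \<delta> s x] by simp

lemma bump_self: "bump \<delta> s s = 1"
  by (simp add: bump_def trace_norm_diff_self)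

lemma bump_eq_0: "0 < \<delta> \<Longrightarrow> \<delta> \<le> trace_norm (mat_diff x s) \<Longrightarrow> bump \<delta> s x = 0"
  by (simp add: bump_def)

lemma bounded_cont_states_bump:
  fixes s :: "'i::countable mat"
  assumes "0 < \<delta>" "density s"
  shows "bounded_cont_states (bump \<delta> s)"
  unfolding bounded_cont_states_def
proof (intro conjI allI impI)
  show "\<exists>B. \<forall>x. density x \<longrightarrow> \<bar>bump \<delta> s x\<bar> \<le> B"
    using abs_bump_le_1[OF assms(1) _ assms(2)] by blast
next
  fix x :: "'i mat" and e :: real assume "density x" "0 < e"
  show "\<exists>d>0. \<forall>y. density y \<longrightarrow> trace_norm (mat_diff y x) < d \<longrightarrow> \<bar>bump \<delta> s y - bump \<delta> s x\<bar> < e"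
  proof (intro exI conjI allI impI)
    show "0 < e * \<delta>" using \<open>0 < e\<close> assms(1) by simp
    fix y :: "'i mat" assume "density y" "trace_norm (mat_diff y x) < e * \<delta>"
    \<comment> \<open>\<open>bump \<delta> s\<close> is \<open>1/\<delta>\<close>-Lipschitz for the trace distance\<close>
    have "\<bar>trace_norm (mat_diff y s) - trace_norm (mat_diff x s)\<bar> \<le> trace_norm (mat_diff y x)"
      using trace_norm_triangle[OF density_diff_trace_class density_diff_trace_class, of y x s]
        trace_norm_triangle[OF density_diff_trace_class density_diff_trace_class, of x y s]
        trace_norm_diff_commute[of x y] \<open>density x\<close> \<open>density y\<close> assms(2)
      by (simp add: abs_le_iff)
    then have "\<bar>(1 - trace_norm (mat_diff y s) / \<delta>) - (1 - trace_norm (mat_diff x s) / \<delta>)\<bar>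
        \<le> trace_norm (mat_diff y x) / \<delta>"
      using assms(1) by (simp add: abs_minus_commute diff_divide_distrib[symmetric] divide_right_mono)
    moreover have "\<bar>max 0 a - max 0 b\<bar> \<le> \<bar>a - b\<bar>" for a b :: real
      by (auto simp: max_def abs_le_iff)
    ultimately have "\<bar>bump \<delta> s y - bump \<delta> s x\<bar> \<le> trace_norm (mat_diff y x) / \<delta>"
      unfolding bump_def by (meson order_trans)
    also have "\<dots> < e" using \<open>trace_norm (mat_diff y x) < e * \<delta>\<close> assms(1) by (simp add: field_simps)
    finally show "\<bar>bump \<delta> s y - bump \<delta> s x\<bar> < e" .
  qed
qed

lemma infsum_fibre_le_ens_expect_bump:
  assumes "ensemble q \<sigma>" "0 < \<delta>" "density s"
  shows "infsum q {j. \<sigma> j = s} \<le> ens_expect q \<sigma> (bump \<delta> s)"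
  unfolding ens_expect_def
proof (rule infsum_mono_neutral)
  show "(\<lambda>i. q i * bump \<delta> s (\<sigma> i)) summable_on UNIV"
    using abs_bump_le_1[OF assms(2) _ assms(3)] by (intro ensemble_bounded_summable_on[OF assms(1)])
qed (auto simp: bump_self ensemble_summable_on[OF assms(1)] ensemble_nonneg[OF assms(1)] bump_nonneg)

lemma ens_expect_bump_le_infsum_ball:
  assumes "ensemble p \<rho>" "0 < \<delta>" "density s"
  shows "ens_expect p \<rho> (bump \<delta> s) \<le> infsum p {i. trace_norm (mat_diff (\<rho> i) s) < \<delta>}"
  unfolding ens_expect_def
proof (rule infsum_mono_neutral)
  show "(\<lambda>i. p i * bump \<delta> s (\<rho> i)) summable_on UNIV"
    using abs_bump_le_1[OF assms(2) _ assms(3)] by (intro ensemble_bounded_summable_on[OF assms(1)])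
  show "p i * bump \<delta> s (\<rho> i) \<le> p i" for i
    using bump_le_1[OF assms(2) ensemble_density[OF assms(1)] assms(3), of i] ensemble_nonneg[OF assms(1), of i]
    by (simp add: mult_left_le)
  show "p i * bump \<delta> s (\<rho> i) \<le> 0" if "i \<in> UNIV - {i. trace_norm (mat_diff (\<rho> i) s) < \<delta>}" for i
    using that bump_eq_0[OF assms(2), of "\<rho> i" s] by simp
qed (auto simp: ensemble_summable_on[OF assms(1)])

lemma ens_expect_tendsto_imp_eventually_mass_near:
  fixes S :: "'i::countable mat set"
  assumes e0: "ensemble p0 \<rho>0" and en: "\<And>n. ensemble (p n) (\<rho> n)"
    and conv: "\<And>f. bounded_cont_states f \<Longrightarrow> (\<lambda>n. ens_expect (p n) (\<rho> n) f) \<longlonglongrightarrow> ens_expect p0 \<rho>0 f"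
    and "finite S" "\<And>s. s \<in> S \<Longrightarrow> density s" "0 < \<delta>" "c < 1"
  shows "\<forall>\<^sub>F n in sequentially. \<forall>s\<in>S.
    c * infsum p0 {j. \<rho>0 j = s} \<le> infsum (p n) {i. trace_norm (mat_diff (\<rho> n i) s) < \<delta>}"
proof (rule eventually_ball_finite[OF \<open>finite S\<close>], rule ballI)
  fix s assume "s \<in> S"
  then have "density s" by fact
  show "\<forall>\<^sub>F n in sequentially. c * infsum p0 {j. \<rho>0 j = s} \<le> infsum (p n) {i. trace_norm (mat_diff (\<rho> n i) s) < \<delta>}"
  proof (cases "infsum p0 {j. \<rho>0 j = s} = 0")
    case True then show ?thesis using ensemble_infsum_nonneg[OF en] by simp
  next
    case False
    then have "c * infsum p0 {j. \<rho>0 j = s} < ens_expect p0 \<rho>0 (bump \<delta> s)"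
      using infsum_fibre_le_ens_expect_bump[OF e0 \<open>0 < \<delta>\<close> \<open>density s\<close>]
        ensemble_infsum_nonneg[OF e0, of "{j. \<rho>0 j = s}"] \<open>c < 1\<close>
      by (smt (verit) mult_less_cancel_right2)
    from order_tendstoD(1)[OF conv[OF bounded_cont_states_bump[OF \<open>0 < \<delta>\<close> \<open>density s\<close>]] this]
    show ?thesis
    proof (rule eventually_mono)
      fix n assume "c * infsum p0 {j. \<rho>0 j = s} < ens_expect (p n) (\<rho> n) (bump \<delta> s)"
      then show "c * infsum p0 {j. \<rho>0 j = s} \<le> infsum (p n) {i. trace_norm (mat_diff (\<rho> n i) s) < \<delta>}"
        using ens_expect_bump_le_infsum_ball[OF en[of n] \<open>0 < \<delta>\<close> \<open>density s\<close>] by linarith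
    qed
  qed
qed

lemma finite_densities_separated:
  fixes S :: "'i::countable mat set"
  assumes "finite S" "\<And>s. s \<in> S \<Longrightarrow> density s" "0 < \<epsilon>"
  obtains \<delta> where "0 < \<delta>" "\<delta> \<le> \<epsilon>" "\<And>s s'. s \<in> S \<Longrightarrow> s' \<in> S \<Longrightarrow> s \<noteq> s' \<Longrightarrow> 2 * \<delta> \<le> trace_norm (mat_diff s s')"
proof -
  define X where "X = insert \<epsilon> ((\<lambda>(s, s'). trace_norm (mat_diff s s') / 2) ` {x \<in> S \<times> S. fst x \<noteq> snd x})"
  have "finite X" unfolding X_def using assms(1) by simp
  moreover have "\<forall>x\<in>X. 0 < x"
    using assms(2,3) trace_norm_diff_pos[OF density_diff_trace_class] unfolding X_def by auto
  ultimately have "0 < Min X" by (simp add: Min_gr_iff X_def)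
  moreover have "Min X \<le> \<epsilon>" using \<open>finite X\<close> by (simp add: X_def)
  moreover have "2 * Min X \<le> trace_norm (mat_diff s s')" if "s \<in> S" "s' \<in> S" "s \<noteq> s'" for s s'
  proof -
    have "trace_norm (mat_diff s s') / 2 \<in> X" unfolding X_def using that by force
    then show ?thesis using Min_le[OF \<open>finite X\<close>] by fastforce
  qed
  ultimately show ?thesis using that by blast
qed

context
  fixes p q :: "nat \<Rightarrow> real" and \<rho> \<sigma> :: "nat \<Rightarrow> 'i::countable mat" and S :: "'i mat set" and \<delta> c :: real
  assumes e1: "ensemble p \<rho>" and e2: "ensemble q \<sigma>" and "0 < \<delta>" "0 \<le> c" "c \<le> 1"
    and separated: "\<And>s s'. s \<in> S \<Longrightarrow> s' \<in> S \<Longrightarrow> s \<noteq> s' \<Longrightarrow> 2 * \<delta> \<le> trace_norm (mat_diff s s')"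
    and mass_near: "\<And>s. s \<in> S \<Longrightarrow> c * infsum q {j. \<sigma> j = s} \<le> infsum p {i. trace_norm (mat_diff (\<rho> i) s) < \<delta>}"
begin

definition ball_mass :: "'i mat \<Rightarrow> real" where
  "ball_mass s = infsum p {i. trace_norm (mat_diff (\<rho> i) s) < \<delta>}"

text \<open>The fraction \<open>c\<close> of the mass of \<open>q\<close> at an atom \<open>s \<in> S\<close> is taken from the \<open>\<delta>\<close>-ball around \<open>s\<close>,
  proportionally to \<open>p\<close>; an atom whose ball carries no mass receives nothing, since \<open>x / 0 = 0\<close>.\<close>

definition near_plan :: "nat \<Rightarrow> nat \<Rightarrow> real" where
  "near_plan i j = (if \<sigma> j \<in> S \<and> trace_norm (mat_diff (\<rho> i) (\<sigma> j)) < \<delta>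
     then c * p i * q j / ball_mass (\<sigma> j) else 0)"

lemma ball_mass_nonneg: "0 \<le> ball_mass s"
  unfolding ball_mass_def by (rule ensemble_infsum_nonneg[OF e1])

lemma near_plan_nonneg: "0 \<le> near_plan i j"
  using ensemble_nonneg[OF e1] ensemble_nonneg[OF e2] ball_mass_nonneg \<open>0 \<le> c\<close>
  by (simp add: near_plan_def)

lemma near_plan_col_has_sum:
  "((\<lambda>i. near_plan i j) has_sum (if \<sigma> j \<in> S \<and> ball_mass (\<sigma> j) \<noteq> 0 then c * q j else 0)) UNIV"
proof (cases "\<sigma> j \<in> S")
  case True
  have "(p has_sum ball_mass (\<sigma> j)) {i. trace_norm (mat_diff (\<rho> i) (\<sigma> j)) < \<delta>}"
    unfolding ball_mass_def by (intro has_sum_infsum ensemble_summable_on[OF e1])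
  then have "((\<lambda>i. p i * (c * q j / ball_mass (\<sigma> j))) has_sum ball_mass (\<sigma> j) * (c * q j / ball_mass (\<sigma> j)))
      {i. trace_norm (mat_diff (\<rho> i) (\<sigma> j)) < \<delta>}"
    by (rule has_sum_cmult_left)
  then have "((\<lambda>i. near_plan i j) has_sum ball_mass (\<sigma> j) * (c * q j / ball_mass (\<sigma> j))) UNIV"
    by (rule has_sum_cong_neutral[THEN iffD1, rotated -1]) (auto simp: near_plan_def True)
  then show ?thesis using True by (cases "ball_mass (\<sigma> j) = 0") auto
qed (simp add: near_plan_def)

lemma near_plan_row_has_sum:
  obtains a where "((\<lambda>j. near_plan i j) has_sum a) UNIV" "a \<le> p i"
proof (cases "\<exists>j0. \<sigma> j0 \<in> S \<and> trace_norm (mat_diff (\<rho> i) (\<sigma> j0)) < \<delta>")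
  case False
  then have "(\<lambda>j. near_plan i j) = (\<lambda>_. 0)" by (auto simp: near_plan_def fun_eq_iff)
  then show ?thesis using that[of 0] ensemble_nonneg[OF e1] by simp
next
  case True
  then obtain j0 where j0: "\<sigma> j0 \<in> S" "trace_norm (mat_diff (\<rho> i) (\<sigma> j0)) < \<delta>" by blast
  \<comment> \<open>by the separation of \<open>S\<close>, \<open>\<sigma> j0\<close> is the only atom near \<open>\<rho> i\<close>\<close>
  have near_iff: "\<sigma> j \<in> S \<and> trace_norm (mat_diff (\<rho> i) (\<sigma> j)) < \<delta> \<longleftrightarrow> \<sigma> j = \<sigma> j0" for j
  proof (intro iffI conjI)
    assume j: "\<sigma> j \<in> S \<and> trace_norm (mat_diff (\<rho> i) (\<sigma> j)) < \<delta>"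
    have "trace_norm (mat_diff (\<sigma> j) (\<sigma> j0))
        \<le> trace_norm (mat_diff (\<sigma> j) (\<rho> i)) + trace_norm (mat_diff (\<rho> i) (\<sigma> j0))"
      using e1 e2 by (intro trace_norm_triangle density_diff_trace_class ensemble_density)
    also have "\<dots> < 2 * \<delta>" using j j0(2) trace_norm_diff_commute[of "\<sigma> j" "\<rho> i"] by simp
    finally show "\<sigma> j = \<sigma> j0" using separated[OF _ j0(1)] j by fastforce
  qed (use j0 in auto)
  define m0 where "m0 = infsum q {j. \<sigma> j = \<sigma> j0}"
  have "(q has_sum m0) {j. \<sigma> j = \<sigma> j0}"
    unfolding m0_def by (intro has_sum_infsum ensemble_summable_on[OF e2])
  then have "((\<lambda>j. c * p i / ball_mass (\<sigma> j0) * q j) has_sum c * p i / ball_mass (\<sigma> j0) * m0) {j. \<sigma> j = \<sigma> j0}"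
    by (rule has_sum_cmult_right)
  then have "((\<lambda>j. near_plan i j) has_sum c * p i / ball_mass (\<sigma> j0) * m0) UNIV"
    by (rule has_sum_cong_neutral[THEN iffD1, rotated -1]) (auto simp: near_plan_def near_iff)
  moreover have "c * p i / ball_mass (\<sigma> j0) * m0 \<le> p i"
  proof (cases "ball_mass (\<sigma> j0) = 0")
    case False
    have "c * m0 \<le> ball_mass (\<sigma> j0)" using mass_near[OF j0(1)] by (simp add: m0_def ball_mass_def)
    then have "p i * (c * m0) \<le> p i * ball_mass (\<sigma> j0)"
      using ensemble_nonneg[OF e1] by (rule mult_left_mono)
    then show ?thesis using False ball_mass_nonneg[of "\<sigma> j0"] by (simp add: field_simps)
  qed (simp add: ensemble_nonneg[OF e1])
  ultimately show ?thesis using that by blast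
qed

lemma empty_ball_no_mass:
  assumes "\<sigma> j \<in> S" "ball_mass (\<sigma> j) = 0"
  shows "c * q j \<le> 0"
proof -
  have "q j \<le> infsum q {k. \<sigma> k = \<sigma> j}"
    using ensemble_summable_on[OF e2] ensemble_nonneg[OF e2]
    by (intro finite_sum_le_infsum[of q "{k. \<sigma> k = \<sigma> j}" "{j}", simplified]) auto
  then have "c * q j \<le> c * infsum q {k. \<sigma> k = \<sigma> j}"
    using \<open>0 \<le> c\<close> by (rule mult_left_mono)
  also have "\<dots> \<le> 0"
    using mass_near[OF assms(1)] assms(2) by (simp add: ball_mass_def)
  finally show ?thesis .
qed

lemma DK_le_near_atoms: "DK p \<rho> q \<sigma> \<le> \<delta> / 2 + (1 - c * infsum q {j. \<sigma> j \<in> S})"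
proof -
  define b where "b = (\<lambda>j. if \<sigma> j \<in> S \<and> ball_mass (\<sigma> j) \<noteq> 0 then c * q j else 0)"
  define a where "a i = infsum (\<lambda>j. near_plan i j) UNIV" for i
  have a: "((\<lambda>j. near_plan i j) has_sum a i) UNIV \<and> a i \<le> p i" for i
  proof -
    obtain a' where "((\<lambda>j. near_plan i j) has_sum a') UNIV" "a' \<le> p i"
      by (rule near_plan_row_has_sum)
    then show ?thesis by (simp add: a_def infsumI)
  qed
  have Q: "coupling near_plan a b"
    unfolding coupling_def b_def using near_plan_nonneg a near_plan_col_has_sum by blast
  have b_le: "b j \<le> q j" for j
    using mult_right_mono[OF \<open>c \<le> 1\<close> ensemble_nonneg[OF e2, of j]] ensemble_nonneg[OF e2, of j]
    by (simp add: b_def)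
  have "b summable_on UNIV"
  proof (rule summable_on_comparison_test[OF ensemble_summable_on[OF e2]])
    show "b j \<le> q j" for j by (rule b_le)
    show "0 \<le> b j" for j using \<open>0 \<le> c\<close> ensemble_nonneg[OF e2] by (simp add: b_def)
  qed
  have b_ge: "c * (if \<sigma> j \<in> S then q j else 0) \<le> b j" for j
    using empty_ball_no_mass[of j] by (auto simp: b_def)
  have S_mass: "((\<lambda>j. if \<sigma> j \<in> S then q j else 0) has_sum infsum q {j. \<sigma> j \<in> S}) UNIV"
    using has_sum_infsum[OF ensemble_summable_on[OF e2, of "{j. \<sigma> j \<in> S}"]]
    by (rule has_sum_cong_neutral[THEN iffD1, rotated -1]) auto
  have b: "(b has_sum infsum b UNIV) UNIV"
    using \<open>b summable_on UNIV\<close> by (rule has_sum_infsum)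
  have "c * infsum q {j. \<sigma> j \<in> S} \<le> infsum b UNIV"
    by (rule has_sum_mono[OF has_sum_cmult_right[OF S_mass] b]) (rule b_ge)
  moreover have "DK p \<rho> q \<sigma> \<le> \<delta> / 2 + (1 - infsum b UNIV)"
    using a b_le \<open>0 < \<delta>\<close>
    by (intro DK_le_sub_coupling[OF e1 e2 Q _ _ b]) (auto simp: near_plan_def split: if_splits)
  ultimately show ?thesis by linarith
qed

end

lemma ens_expect_tendsto_imp_DK_tendsto:
  fixes p :: "nat \<Rightarrow> nat \<Rightarrow> real" and \<rho> :: "nat \<Rightarrow> nat \<Rightarrow> ('i::countable) mat"
  assumes e0: "ensemble p0 \<rho>0" and en: "\<And>n. ensemble (p n) (\<rho> n)"
    and conv: "\<And>f. bounded_cont_states f \<Longrightarrow> (\<lambda>n. ens_expect (p n) (\<rho> n) f) \<longlonglongrightarrow> ens_expect p0 \<rho>0 f"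
  shows "(\<lambda>n. DK (p n) (\<rho> n) p0 \<rho>0) \<longlonglongrightarrow> 0"
proof (rule tendstoI)
  fix r :: real assume "0 < r"
  define \<epsilon> where "\<epsilon> = min 1 (r / 4)"
  have "0 < \<epsilon>" "\<epsilon> \<le> 1" "\<epsilon> \<le> r / 4" using \<open>0 < r\<close> by (auto simp: \<epsilon>_def)
  obtain J where "finite J" and J: "1 - \<epsilon> < sum p0 J"
    using ensemble_finite_mass[OF e0 \<open>0 < \<epsilon>\<close>] by blast
  define S where "S = \<rho>0 ` J"
  have "finite S" using \<open>finite J\<close> by (simp add: S_def)
  have dS: "density s" if "s \<in> S" for s using that ensemble_density[OF e0] by (auto simp: S_def)
  obtain \<delta> where "0 < \<delta>" "\<delta> \<le> \<epsilon>"
    and sep: "\<And>s s'. s \<in> S \<Longrightarrow> s' \<in> S \<Longrightarrow> s \<noteq> s' \<Longrightarrow> 2 * \<delta> \<le> trace_norm (mat_diff s s')"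
    using finite_densities_separated[OF \<open>finite S\<close> dS \<open>0 < \<epsilon>\<close>] by blast
  have "\<forall>\<^sub>F n in sequentially. \<forall>s\<in>S.
      (1 - \<epsilon>) * infsum p0 {j. \<rho>0 j = s} \<le> infsum (p n) {i. trace_norm (mat_diff (\<rho> n i) s) < \<delta>}"
    using \<open>0 < \<epsilon>\<close> by (intro ens_expect_tendsto_imp_eventually_mass_near[OF e0 en conv \<open>finite S\<close> dS \<open>0 < \<delta>\<close>]) auto
  then show "\<forall>\<^sub>F n in sequentially. dist (DK (p n) (\<rho> n) p0 \<rho>0) 0 < r"
  proof (rule eventually_mono)
    fix n
    assume "\<forall>s\<in>S. (1 - \<epsilon>) * infsum p0 {j. \<rho>0 j = s} \<le> infsum (p n) {i. trace_norm (mat_diff (\<rho> n i) s) < \<delta>}"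
    then have DK: "DK (p n) (\<rho> n) p0 \<rho>0 \<le> \<delta> / 2 + (1 - (1 - \<epsilon>) * infsum p0 {j. \<rho>0 j \<in> S})"
      using \<open>\<epsilon> \<le> 1\<close> \<open>0 < \<epsilon>\<close> sep by (intro DK_le_near_atoms[OF en e0 \<open>0 < \<delta>\<close>]) auto
    have "(1 - \<epsilon>) * (1 - \<epsilon>) \<le> (1 - \<epsilon>) * infsum p0 {j. \<rho>0 j \<in> S}"
      using J ensemble_sum_le_infsum_image[OF e0 \<open>finite J\<close>] \<open>\<epsilon> \<le> 1\<close>
      by (intro mult_left_mono) (auto simp: S_def)
    moreover have "(1 - \<epsilon>) * (1 - \<epsilon>) = 1 - 2 * \<epsilon> + \<epsilon> * \<epsilon>" by algebra
    ultimately have "DK (p n) (\<rho> n) p0 \<rho>0 \<le> \<epsilon> / 2 + 2 * \<epsilon>"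
      using DK \<open>\<delta> \<le> \<epsilon>\<close> mult_nonneg_nonneg[of \<epsilon> \<epsilon>] \<open>0 < \<epsilon>\<close> by linarith
    then show "dist (DK (p n) (\<rho> n) p0 \<rho>0) 0 < r"
      using DK_nonneg[OF en e0] \<open>\<epsilon> \<le> r / 4\<close> \<open>0 < r\<close> by (simp add: dist_real_def)
  qed
qed

theorem proposition4:
  fixes p :: "nat \<Rightarrow> nat \<Rightarrow> real" and \<rho> :: "nat \<Rightarrow> nat \<Rightarrow> ('i::countable) mat"
    and p0 :: "nat \<Rightarrow> real" and \<rho>0 :: "nat \<Rightarrow> 'i mat"
  assumes "ensemble p0 \<rho>0" and "\<And>n. ensemble (p n) (\<rho> n)"
  shows "((\<lambda>n. Dstar (p n) (\<rho> n) p0 \<rho>0) \<longlonglongrightarrow> 0 \<longleftrightarrow> (\<lambda>n. DK (p n) (\<rho> n) p0 \<rho>0) \<longlonglongrightarrow> 0)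
       \<and> ((\<lambda>n. DK (p n) (\<rho> n) p0 \<rho>0) \<longlonglongrightarrow> 0 \<longleftrightarrow>
          (\<forall>f. bounded_cont_states f \<longrightarrow>
             (\<lambda>n. infsum (\<lambda>i. p n i * f (\<rho> n i)) UNIV) \<longlonglongrightarrow> infsum (\<lambda>i. p0 i * f (\<rho>0 i)) UNIV))"
proof -
  have b_imp_a: "(\<lambda>n. Dstar (p n) (\<rho> n) p0 \<rho>0) \<longlonglongrightarrow> 0" if "(\<lambda>n. DK (p n) (\<rho> n) p0 \<rho>0) \<longlonglongrightarrow> 0"
  proof (rule Lim_null_comparison[OF _ that])
    show "\<forall>\<^sub>F n in sequentially. norm (Dstar (p n) (\<rho> n) p0 \<rho>0) \<le> DK (p n) (\<rho> n) p0 \<rho>0"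
      using Dstar_nonneg[OF assms(2,1)] Dstar_le_DK[OF assms(2,1)] by simp
  qed
  have a_imp_c: "\<forall>f. bounded_cont_states f \<longrightarrow> (\<lambda>n. ens_expect (p n) (\<rho> n) f) \<longlonglongrightarrow> ens_expect p0 \<rho>0 f"
    if "(\<lambda>n. Dstar (p n) (\<rho> n) p0 \<rho>0) \<longlonglongrightarrow> 0"
    using Dstar_tendsto_imp_ens_expect_tendsto[OF assms that] by simp
  have c_imp_b: "(\<lambda>n. DK (p n) (\<rho> n) p0 \<rho>0) \<longlonglongrightarrow> 0"
    if "\<forall>f. bounded_cont_states f \<longrightarrow> (\<lambda>n. ens_expect (p n) (\<rho> n) f) \<longlonglongrightarrow> ens_expect p0 \<rho>0 f"
    using that by (intro ens_expect_tendsto_imp_DK_tendsto[OF assms]) simp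
  have "(\<forall>f. bounded_cont_states f \<longrightarrow>
      (\<lambda>n. infsum (\<lambda>i. p n i * f (\<rho> n i)) UNIV) \<longlonglongrightarrow> infsum (\<lambda>i. p0 i * f (\<rho>0 i)) UNIV)
    \<longleftrightarrow> (\<forall>f. bounded_cont_states f \<longrightarrow> (\<lambda>n. ens_expect (p n) (\<rho> n) f) \<longlonglongrightarrow> ens_expect p0 \<rho>0 f)"
    by (simp add: ens_expect_def)
  then show ?thesis
    using b_imp_a a_imp_c c_imp_b by blast
qed

end
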